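(* Fix $n\in2\mathbb Z_{\ge1}$. For any $c\in\mathbb C$ and complex $\boldsymbol a=(a_1,\dots,a_k)$ with $|a_ia_j|<1$ for all $1\le i<j\le k$ and $|a_ic|<1$ for all $1\le i\le k$, and for all $\kappa\in\mathsf{Sign}_n$, $$\sum_{\lambda\in\mathsf{Sign}_n}\tau_\lambda(c)s_{\kappa/\lambda}(\boldsymbol a)=\sum_{\pi\in\mathsf{Sign}_n}\tau_\pi(c)s_{\pi/\kappa}(\boldsymbol a),$$ with both sums finite (absolutely convergent).
   Context: $\mathsf{Sign}_n$ is the set of signatures $\lambda=(\lambda_1\ge\dots\ge\lambda_n)$, $\lambda_i\in\mathbb Z$. $\mu\preceq\lambda$ means $\lambda_1\ge\mu_1\ge\lambda_2\ge\mu_2\ge\dots\ge\lambda_n\ge\mu_n$; $|\lambda/\mu|=\sum_i(\lambda_i-\mu_i)$; $s_{\lambda/\mu}(a)=\mathbf 1_{\mu\preceq\lambda}a^{|\lambda/\mu|}$ and $s_{\lambda/\mu}(a_1,\dots,a_k)=\sum_{\nu\in\mathsf{Sign}_n}s_{\lambda/\nu}(a_1,\dots,a_{k-1})s_{\nu/\mu}(a_k)$. For $\lambda\in\mathsf{Sign}_n$, $\tau_\lambda(c)=c^{\sum_{j=1}^n(-1)^{j-1}\lambda_j}=c^{\lambda_1-\lambda_2+\lambda_3-\dots}$. *)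

theory Defs
  imports "HOL-Analysis.Analysis"
begin

text \<open>Signatures of length n, represented as integer lists (index 0 = lambda_1).\<close>
definition Sign :: "nat \<Rightarrow> int list set" where
  "Sign n = {l. length l = n \<and> (\<forall>i. Suc i < n \<longrightarrow> l ! i \<ge> l ! Suc i)}"

definition interlace :: "int list \<Rightarrow> int list \<Rightarrow> bool" where
  "interlace mu lam \<longleftrightarrow> length mu = length lam \<and>
     (\<forall>i < length lam. lam ! i \<ge> mu ! i) \<and>
     (\<forall>i. Suc i < length lam \<longrightarrow> mu ! i \<ge> lam ! Suc i)"

definition skew_size :: "int list \<Rightarrow> int list \<Rightarrow> int" where
  "skew_size lam mu = (\<Sum>i<length lam. lam ! i - mu ! i)"

definition skew1 :: "int list \<Rightarrow> int list \<Rightarrow> complex \<Rightarrow> complex" where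
  "skew1 lam mu a = (if interlace mu lam then a ^ nat (skew_size lam mu) else 0)"

text \<open>skew_rev n lam mu [a_k, ..., a_1] = s_{lam/mu}(a_1,...,a_k), by the recursion
  s_{lam/mu}(a_1..a_k) = sum over nu in Sign_n of s_{lam/nu}(a_1..a_{k-1}) s_{nu/mu}(a_k);
  with no variables it is the indicator of lam = mu.\<close>
fun skew_rev :: "nat \<Rightarrow> int list \<Rightarrow> int list \<Rightarrow> complex list \<Rightarrow> complex" where
  "skew_rev n lam mu [] = (if lam = mu then 1 else 0)"
| "skew_rev n lam mu (x # xs) = (\<Sum>\<^sub>\<infinity> nu \<in> Sign n. skew_rev n lam nu xs * skew1 nu mu x)"

definition skew :: "nat \<Rightarrow> int list \<Rightarrow> int list \<Rightarrow> complex list \<Rightarrow> complex" where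
  "skew n lam mu as = skew_rev n lam mu (rev as)"

definition tau :: "int list \<Rightarrow> complex \<Rightarrow> complex" where
  "tau lam c = c powi (\<Sum>j<length lam. (-1) ^ j * lam ! j)"

end

theory Submission
  imports Defs
begin

text \<open>The proof is by induction on the number of variables, using
  \<open>s\<^sub>\<kappa>\<^sub>/\<^sub>\<lambda>(a, x) = \<Sum>\<^sub>\<nu> s\<^sub>\<kappa>\<^sub>/\<^sub>\<nu>(a) s\<^sub>\<nu>\<^sub>/\<^sub>\<lambda>(x)\<close>. Two one-variable facts come from a
  single bijection: \<open>reflect \<kappa> \<pi>\<close> maps the signatures interlacing below both \<open>\<kappa>\<close> and \<open>\<pi>\<close> onto
  those interlacing above both, exchanging \<open>|\<kappa>/\<lambda>|\<close> with \<open>|\<pi>/\<lambda>|\<close>, and for even \<open>n\<close> and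
  \<open>\<kappa> = \<pi>\<close> it preserves the alternating sum \<open>\<lambda>\<^sub>1 - \<lambda>\<^sub>2 + \<lambda>\<^sub>3 - \<dots>\<close>. Hence the identity
  holds for one variable, and the one-variable skew Schur functions in \<open>x\<close> and \<open>y\<close> commute
  without the factor \<open>1/(1 - xy)\<close> of the skew Cauchy identity; moving the new variable
  through the sum then reduces the step to the induction hypothesis.

  Every interchange of summations is justified by absolute convergence. A kernel is
  \<open>weight_bounded\<close> from \<open>B\<close> to \<open>B'\<close> if it maps the weight \<open>B\<^bsup>alt \<lambda>\<^esup>\<close> to at most a multiple
  of \<open>B'\<^bsup>alt \<kappa>\<^esup>\<close>. A one-variable kernel with radius \<open>r\<close> is weight bounded as soon as
  \<open>\<theta> r B \<le> 1\<close> for some \<open>\<theta> > 1\<close>, the surplus \<open>\<theta>\<close> paying for a geometric series over the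
  increments of the interlacing signature; such bounds compose, and the hypotheses
  \<open>|a\<^sub>i a\<^sub>j| < 1\<close>, \<open>|a\<^sub>i c| < 1\<close> leave room for a common \<open>\<theta>\<close>.\<close>

definition alt_sum :: "int list \<Rightarrow> int" where
  "alt_sum l = (\<Sum>j<length l. (-1) ^ j * l ! j)"

lemma tau_eq_power_int: "tau l c = c powi alt_sum l"
  by (simp add: tau_def alt_sum_def)

lemma sum_lessThan_double:
  fixes f :: "nat \<Rightarrow> 'a::comm_monoid_add"
  shows "(\<Sum>i<2*k. f i) = (\<Sum>m<k. f (2*m) + f (2*m+1))"
proof (induction k)
  case (Suc k)
  have "{..<2 * Suc k} = insert (Suc (2*k)) (insert (2*k) {..<2*k})" by auto
  then show ?case using Suc by (simp add: ac_simps)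
qed simp

lemma alt_sum_pairs: "length l = 2*k \<Longrightarrow> alt_sum l = (\<Sum>m<k. l!(2*m) - l!(2*m+1))"
  unfolding alt_sum_def by (simp add: sum_lessThan_double)

lemma alt_sum_nonneg:
  assumes "even n" "l \<in> Sign n"
  shows "0 \<le> alt_sum l"
proof -
  obtain k where n: "n = 2*k" using assms(1) by blast
  have "\<forall>m<k. l!(2*m+1) \<le> l!(2*m)" using assms(2) by (auto simp: Sign_def n)
  then show ?thesis
    using assms(2) by (auto simp: alt_sum_pairs Sign_def n intro: sum_nonneg)
qed

lemma sum_list_map2_add:
  "length u = length v \<Longrightarrow> sum_list (map2 (+) u v) = sum_list u + sum_list (v :: int list)"
  by (induction u v rule: list_induct2) auto

lemma sum_list_map2_diff:
  "length u = length v \<Longrightarrow> sum_list (map2 (-) u v) = sum_list u - sum_list (v :: int list)"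
  by (induction u v rule: list_induct2) auto

lemma alt_sum_map2_add:
  "length u = length v \<Longrightarrow> alt_sum (map2 (+) u v) = alt_sum u + alt_sum v"
  by (simp add: alt_sum_def sum.distrib distrib_left)

lemma alt_sum_map2_diff:
  "length u = length v \<Longrightarrow> alt_sum (map2 (-) u v) = alt_sum u - alt_sum v"
  by (simp add: alt_sum_def sum_subtractf right_diff_distrib)

lemma skew_size_eq_sum_list:
  "length lam = length mu \<Longrightarrow> skew_size lam mu = sum_list lam - sum_list mu"
  by (simp add: skew_size_def sum_list_sum_nth atLeast0LessThan sum_subtractf)

lemma skew_size_nonneg: "interlace \<mu> \<nu> \<Longrightarrow> 0 \<le> skew_size \<nu> \<mu>"
  unfolding skew_size_def interlace_def by (auto intro: sum_nonneg)

lemma interlace_lower_Sign: "\<kappa> \<in> Sign n \<Longrightarrow> interlace l \<kappa> \<Longrightarrow> l \<in> Sign n"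
  unfolding Sign_def interlace_def by (auto intro: order.trans)

lemma interlace_upper_Sign: "\<kappa> \<in> Sign n \<Longrightarrow> interlace \<kappa> p \<Longrightarrow> p \<in> Sign n"
  unfolding Sign_def interlace_def by (auto intro: order.trans)

lemma skew_Nil: "skew n \<kappa> l [] = (if \<kappa> = l then 1 else 0)"
  by (simp add: skew_def)

lemma skew_snoc: "skew n \<kappa> l (as @ [x]) = (\<Sum>\<^sub>\<infinity>\<nu>\<in>Sign n. skew n \<kappa> \<nu> as * skew1 \<nu> l x)"
  by (simp add: skew_def)

lemma has_sum_single:
  fixes v :: "'b::{comm_monoid_add, topological_space}"
  assumes "x \<in> A"
  shows "((\<lambda>y. if y = x then v else 0) has_sum v) A"
proof -
  have "((\<lambda>y. if y = x then v else 0) has_sum v) {x}"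
    by (rule has_sum_finiteI) auto
  then show ?thesis
    by (rule has_sum_cong_neutral[THEN iffD1, rotated -1]) (use assms in auto)
qed

lemma infsum_skew_Nil:
  assumes "\<kappa> \<in> Sign n"
  shows "(\<Sum>\<^sub>\<infinity>\<nu>\<in>Sign n. skew n \<kappa> \<nu> [] * f \<nu>) = f \<kappa>"
    and "(\<Sum>\<^sub>\<infinity>\<nu>\<in>Sign n. f \<nu> * skew n \<nu> \<kappa> []) = f \<kappa>"
proof -
  have "(\<lambda>\<nu>. skew n \<kappa> \<nu> [] * f \<nu>) = (\<lambda>\<nu>. if \<nu> = \<kappa> then f \<kappa> else 0)"
    "(\<lambda>\<nu>. f \<nu> * skew n \<nu> \<kappa> []) = (\<lambda>\<nu>. if \<nu> = \<kappa> then f \<kappa> else 0)"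
    by (auto simp: fun_eq_iff skew_Nil)
  then show "(\<Sum>\<^sub>\<infinity>\<nu>\<in>Sign n. skew n \<kappa> \<nu> [] * f \<nu>) = f \<kappa>"
    and "(\<Sum>\<^sub>\<infinity>\<nu>\<in>Sign n. f \<nu> * skew n \<nu> \<kappa> []) = f \<kappa>"
    using infsumI[OF has_sum_single[OF assms]] by simp_all
qed

section \<open>Cyclic reflection of interlacing signatures\<close>

definition cshift :: "int list \<Rightarrow> int list" where
  "cshift l = (if l = [] then [] else last l # butlast l)"

lemma length_cshift [simp]: "length (cshift l) = length l"
  by (simp add: cshift_def)

lemma nth_cshift:
  "i < length l \<Longrightarrow> cshift l ! i = l ! (if i = 0 then length l - 1 else i - 1)"
  by (cases i) (auto simp: cshift_def last_conv_nth nth_butlast)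

lemma sum_list_cshift: "sum_list (cshift l) = sum_list l"
  by (cases l rule: rev_cases) (simp_all add: cshift_def)

lemma alt_sum_cshift:
  assumes "even (length l)"
  shows "alt_sum (cshift l) = - alt_sum l"
proof (cases "l = []")
  case False
  then obtain m where m: "length l = Suc m" and "odd m"
    using assms by (cases "length l") auto
  have "alt_sum (cshift l) = (\<Sum>i<Suc m. (-1) ^ i * cshift l ! i)"
    using m by (simp add: alt_sum_def del: sum.lessThan_Suc)
  also have "\<dots> = l ! m + (\<Sum>i<m. (-1) ^ Suc i * l ! i)"
    by (simp only: sum.lessThan_Suc_shift) (simp add: nth_cshift m)
  also have "\<dots> = - alt_sum l"
    using m \<open>odd m\<close> by (simp add: alt_sum_def sum_negf)
  finally show ?thesis .
qed (simp add: cshift_def alt_sum_def)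

lemma cshift_rotate1: "cshift (rotate1 l) = l"
  by (cases l) (simp_all add: cshift_def)

lemma rotate1_cshift: "rotate1 (cshift l) = l"
  by (simp add: cshift_def)

text \<open>The entries of \<open>reflect \<kappa> \<pi> l\<close> are
  \<open>max \<kappa>\<^sub>i \<pi>\<^sub>i + min \<kappa>\<^sub>i\<^sub>-\<^sub>1 \<pi>\<^sub>i\<^sub>-\<^sub>1 - l\<^sub>i\<^sub>-\<^sub>1\<close>, indices taken cyclically.\<close>

definition reflect_base :: "int list \<Rightarrow> int list \<Rightarrow> int list" where
  "reflect_base \<kappa> \<pi> = map2 (+) (map2 max \<kappa> \<pi>) (cshift (map2 min \<kappa> \<pi>))"

definition reflect :: "int list \<Rightarrow> int list \<Rightarrow> int list \<Rightarrow> int list" where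
  "reflect \<kappa> \<pi> l = map2 (-) (reflect_base \<kappa> \<pi>) (cshift l)"

definition reflect_inv :: "int list \<Rightarrow> int list \<Rightarrow> int list \<Rightarrow> int list" where
  "reflect_inv \<kappa> \<pi> p = rotate1 (map2 (-) (reflect_base \<kappa> \<pi>) p)"

lemma length_reflect_base:
  "length \<kappa> = n \<Longrightarrow> length \<pi> = n \<Longrightarrow> length (reflect_base \<kappa> \<pi>) = n"
  by (simp add: reflect_base_def)

lemma nth_reflect_base:
  assumes "length \<kappa> = n" "length \<pi> = n" "i < n" "j = (if i = 0 then n - 1 else i - 1)"
  shows "reflect_base \<kappa> \<pi> ! i = max (\<kappa>!i) (\<pi>!i) + min (\<kappa>!j) (\<pi>!j)"
  using assms by (simp add: reflect_base_def nth_cshift)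

lemma nth_reflect:
  assumes "length \<kappa> = n" "length \<pi> = n" "length l = n" "i < n"
    and "j = (if i = 0 then n - 1 else i - 1)"
  shows "reflect \<kappa> \<pi> l ! i = max (\<kappa>!i) (\<pi>!i) + min (\<kappa>!j) (\<pi>!j) - l!j"
  using assms by (simp add: reflect_def length_reflect_base nth_reflect_base nth_cshift)

lemma nth_reflect_inv:
  assumes "length \<kappa> = n" "length \<pi> = n" "length p = n" "j < n" "i = Suc j mod n"
  shows "reflect_inv \<kappa> \<pi> p ! j = max (\<kappa>!i) (\<pi>!i) + min (\<kappa>!j) (\<pi>!j) - p!i"
proof -
  have i: "i < n" "j = (if i = 0 then n - 1 else i - 1)"
    using assms(4,5) by (auto simp: mod_Suc)
  have "reflect_inv \<kappa> \<pi> p ! j = reflect_base \<kappa> \<pi> ! i - p ! i"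
    using assms by (simp add: reflect_inv_def nth_rotate1 length_reflect_base)
  also have "\<dots> = max (\<kappa>!i) (\<pi>!i) + min (\<kappa>!j) (\<pi>!j) - p!i"
    by (simp add: nth_reflect_base[OF assms(1,2) i])
  finally show ?thesis .
qed

lemma reflect_upper:
  assumes "interlace l \<kappa>" "interlace l \<pi>"
  shows "interlace \<kappa> (reflect \<kappa> \<pi> l) \<and> interlace \<pi> (reflect \<kappa> \<pi> l)"
proof -
  define n where "n = length l"
  have len: "length \<kappa> = n" "length \<pi> = n" "length (reflect \<kappa> \<pi> l) = n"
    using assms by (auto simp: interlace_def n_def reflect_def length_reflect_base)
  have below: "l!j \<le> \<kappa>!j" "l!j \<le> \<pi>!j" if "j < n" for j
    using assms that len by (auto simp: interlace_def)
  have above: "\<kappa>!Suc j \<le> l!j" "\<pi>!Suc j \<le> l!j" if "Suc j < n" for j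
    using assms that len by (auto simp: interlace_def)
  have lo: "max (\<kappa>!i) (\<pi>!i) \<le> reflect \<kappa> \<pi> l ! i" if "i < n" for i
  proof -
    define j where "j = (if i = 0 then n - 1 else i - 1)"
    have "j < n" using that by (cases "i = 0") (auto simp: j_def)
    then show ?thesis
      using below[of j] nth_reflect[OF len(1,2) n_def[symmetric] that j_def]
      by (auto simp: max_def min_def)
  qed
  have hi: "reflect \<kappa> \<pi> l ! Suc i \<le> min (\<kappa>!i) (\<pi>!i)" if "Suc i < n" for i
    using that len above[OF that]
    by (subst nth_reflect[OF len(1,2) n_def[symmetric] that refl]) auto
  show ?thesis
    using lo hi len by (auto simp: interlace_def)
qed

lemma reflect_inv_lower:
  assumes "interlace \<kappa> p" "interlace \<pi> p"
  shows "interlace (reflect_inv \<kappa> \<pi> p) \<kappa> \<and> interlace (reflect_inv \<kappa> \<pi> p) \<pi>"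
proof -
  define n where "n = length p"
  have len: "length \<kappa> = n" "length \<pi> = n" "length (reflect_inv \<kappa> \<pi> p) = n"
    using assms by (auto simp: interlace_def n_def reflect_inv_def length_reflect_base)
  have above: "\<kappa>!i \<le> p!i" "\<pi>!i \<le> p!i" if "i < n" for i
    using assms that len by (auto simp: interlace_def)
  have below: "p!Suc j \<le> \<kappa>!j" "p!Suc j \<le> \<pi>!j" if "Suc j < n" for j
    using assms that len by (auto simp: interlace_def)
  have hi: "reflect_inv \<kappa> \<pi> p ! j \<le> min (\<kappa>!j) (\<pi>!j)" if "j < n" for j
  proof -
    have "Suc j mod n < n" using that by simp
    then show ?thesis
      using above[of "Suc j mod n"]
      by (subst nth_reflect_inv[OF len(1,2) n_def[symmetric] that refl]) auto
  qed
  have lo: "max (\<kappa>!Suc j) (\<pi>!Suc j) \<le> reflect_inv \<kappa> \<pi> p ! j" if "Suc j < n" for j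
    using that below[OF that]
    by (subst nth_reflect_inv[OF len(1,2) n_def[symmetric] _ refl]) auto
  show ?thesis
    using lo hi len by (auto simp: interlace_def)
qed

lemma map2_diff_diff: "length w = length p \<Longrightarrow> map2 (-) w (map2 (-) w p) = (p :: int list)"
  by (induction w p rule: list_induct2) auto

lemma bij_betw_reflect:
  assumes "\<kappa> \<in> Sign n" "\<pi> \<in> Sign n"
  shows "bij_betw (reflect \<kappa> \<pi>) {l. interlace l \<kappa> \<and> interlace l \<pi>} {p. interlace \<kappa> p \<and> interlace \<pi> p}"
proof (rule bij_betw_byWitness[where f' = "reflect_inv \<kappa> \<pi>"])
  have len: "length \<kappa> = n" "length \<pi> = n" using assms by (auto simp: Sign_def)
  show "\<forall>l\<in>{l. interlace l \<kappa> \<and> interlace l \<pi>}. reflect_inv \<kappa> \<pi> (reflect \<kappa> \<pi> l) = l"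
    using len
    by (auto simp: interlace_def reflect_def reflect_inv_def length_reflect_base map2_diff_diff
        rotate1_cshift)
  show "\<forall>p\<in>{p. interlace \<kappa> p \<and> interlace \<pi> p}. reflect \<kappa> \<pi> (reflect_inv \<kappa> \<pi> p) = p"
    using len
    by (auto simp: interlace_def reflect_def reflect_inv_def length_reflect_base map2_diff_diff
        cshift_rotate1)
qed (auto dest: reflect_upper reflect_inv_lower)

lemma sum_list_map2_max_min:
  "length u = length v \<Longrightarrow> sum_list (map2 max u v) + sum_list (map2 min u v) = sum_list u + sum_list (v :: int list)"
  by (induction u v rule: list_induct2) auto

lemma skew_size_reflect:
  assumes "interlace l \<kappa>" "interlace l \<pi>"
  shows "skew_size (reflect \<kappa> \<pi> l) \<kappa> = skew_size \<pi> l"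
    and "skew_size (reflect \<kappa> \<pi> l) \<pi> = skew_size \<kappa> l"
proof -
  have len: "length \<kappa> = length l" "length \<pi> = length l"
    using assms by (auto simp: interlace_def)
  have "sum_list (reflect \<kappa> \<pi> l) = sum_list \<kappa> + sum_list \<pi> - sum_list l"
    using len sum_list_map2_max_min[of \<kappa> \<pi>]
    by (simp add: reflect_def reflect_base_def sum_list_map2_diff sum_list_map2_add
        length_reflect_base sum_list_cshift)
  then show "skew_size (reflect \<kappa> \<pi> l) \<kappa> = skew_size \<pi> l"
    and "skew_size (reflect \<kappa> \<pi> l) \<pi> = skew_size \<kappa> l"
    using len by (simp_all add: skew_size_eq_sum_list reflect_def length_reflect_base)
qed

lemma alt_sum_reflect_self:
  assumes "even (length \<kappa>)" "interlace l \<kappa>"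
  shows "alt_sum (reflect \<kappa> \<kappa> l) = alt_sum l"
proof -
  have len: "length l = length \<kappa>"
    using assms by (auto simp: interlace_def)
  have "map2 max \<kappa> \<kappa> = \<kappa>" "map2 min \<kappa> \<kappa> = \<kappa>"
    by (simp_all add: zip_same_conv_map map_idI)
  then have "alt_sum (reflect_base \<kappa> \<kappa>) = 0"
    using assms(1) len by (simp add: reflect_base_def alt_sum_map2_add alt_sum_cshift)
  then show ?thesis
    using assms(1) len
    by (simp add: reflect_def alt_sum_map2_diff length_reflect_base alt_sum_cshift)
qed

lemma reflect_has_sum_iff:
  assumes "\<kappa> \<in> Sign n" "\<pi> \<in> Sign n"
    and f: "\<And>l. l \<in> Sign n \<Longrightarrow> \<not> (interlace l \<kappa> \<and> interlace l \<pi>) \<Longrightarrow> f l = 0"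
    and g: "\<And>p. p \<in> Sign n \<Longrightarrow> \<not> (interlace \<kappa> p \<and> interlace \<pi> p) \<Longrightarrow> g p = 0"
    and fg: "\<And>l. interlace l \<kappa> \<Longrightarrow> interlace l \<pi> \<Longrightarrow> g (reflect \<kappa> \<pi> l) = f l"
  shows "(f has_sum s) (Sign n) \<longleftrightarrow> (g has_sum s) (Sign n)"
proof -
  let ?L = "{l. interlace l \<kappa> \<and> interlace l \<pi>}" and ?U = "{p. interlace \<kappa> p \<and> interlace \<pi> p}"
  have "(f has_sum s) (Sign n) \<longleftrightarrow> (f has_sum s) ?L"
    by (rule has_sum_cong_neutral) (use f assms(1) interlace_lower_Sign in auto)
  also have "\<dots> \<longleftrightarrow> ((\<lambda>l. g (reflect \<kappa> \<pi> l)) has_sum s) ?L"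
    by (rule has_sum_cong) (use fg in auto)
  also have "\<dots> \<longleftrightarrow> (g has_sum s) ?U"
    by (rule has_sum_reindex_bij_betw[OF bij_betw_reflect[OF assms(1,2)]])
  also have "\<dots> \<longleftrightarrow> (g has_sum s) (Sign n)"
    by (rule has_sum_cong_neutral) (use g assms(1) interlace_upper_Sign in auto)
  finally show ?thesis .
qed

lemma reflect_self_has_sum_iff:
  fixes g :: "int \<Rightarrow> int \<Rightarrow> 'a::{comm_monoid_add, topological_space}"
  assumes "even n" "\<kappa> \<in> Sign n"
  shows "((\<lambda>l. if interlace l \<kappa> then g (skew_size \<kappa> l) (alt_sum l) else 0) has_sum s) (Sign n)
     \<longleftrightarrow> ((\<lambda>p. if interlace \<kappa> p then g (skew_size p \<kappa>) (alt_sum p) else 0) has_sum s) (Sign n)"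
proof (rule reflect_has_sum_iff[OF assms(2,2)])
  fix l assume l: "interlace l \<kappa>" "interlace l \<kappa>"
  have "length \<kappa> = n" using assms(2) by (simp add: Sign_def)
  then show "(if interlace \<kappa> (reflect \<kappa> \<kappa> l)
        then g (skew_size (reflect \<kappa> \<kappa> l) \<kappa>) (alt_sum (reflect \<kappa> \<kappa> l)) else 0)
      = (if interlace l \<kappa> then g (skew_size \<kappa> l) (alt_sum l) else 0)"
    using reflect_upper[OF l] skew_size_reflect[OF l] alt_sum_reflect_self[of \<kappa> l] assms(1) l
    by simp
qed auto

lemma skew1_tau_reflect:
  assumes "even n" "\<kappa> \<in> Sign n"
  shows "(\<Sum>\<^sub>\<infinity>l\<in>Sign n. skew1 \<kappa> l a * tau l c) = (\<Sum>\<^sub>\<infinity>p\<in>Sign n. skew1 p \<kappa> a * tau p c)"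
proof (rule infsum_eqI')
  fix s
  have "(\<lambda>l. skew1 \<kappa> l a * tau l c)
      = (\<lambda>l. if interlace l \<kappa> then a ^ nat (skew_size \<kappa> l) * c powi alt_sum l else 0)"
    "(\<lambda>p. skew1 p \<kappa> a * tau p c)
      = (\<lambda>p. if interlace \<kappa> p then a ^ nat (skew_size p \<kappa>) * c powi alt_sum p else 0)"
    by (simp_all add: fun_eq_iff skew1_def tau_eq_power_int)
  then show "((\<lambda>l. skew1 \<kappa> l a * tau l c) has_sum s) (Sign n)
      \<longleftrightarrow> ((\<lambda>p. skew1 p \<kappa> a * tau p c) has_sum s) (Sign n)"
    using reflect_self_has_sum_iff[OF assms, of "\<lambda>d e. a ^ nat d * c powi e" s] by simp
qed

lemma skew1_commute:
  assumes "\<kappa> \<in> Sign n" "\<pi> \<in> Sign n"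
  shows "(\<Sum>\<^sub>\<infinity>\<nu>\<in>Sign n. skew1 \<kappa> \<nu> a * skew1 \<pi> \<nu> b) = (\<Sum>\<^sub>\<infinity>\<zeta>\<in>Sign n. skew1 \<zeta> \<kappa> b * skew1 \<zeta> \<pi> a)"
proof (rule infsum_eqI', rule reflect_has_sum_iff[OF assms])
  fix l assume l: "interlace l \<kappa>" "interlace l \<pi>"
  then show "skew1 (reflect \<kappa> \<pi> l) \<kappa> b * skew1 (reflect \<kappa> \<pi> l) \<pi> a = skew1 \<kappa> l a * skew1 \<pi> l b"
    using reflect_upper[OF l] skew_size_reflect[OF l] by (simp add: skew1_def)
qed (auto simp: skew1_def)

section \<open>Weighted bounds for one-variable branching\<close>

definition skew1_real :: "int list \<Rightarrow> int list \<Rightarrow> real \<Rightarrow> real" where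
  "skew1_real lam mu r = (if interlace mu lam then r ^ nat (skew_size lam mu) else 0)"

lemma norm_skew1: "norm (skew1 lam mu a) = skew1_real lam mu (norm a)"
  by (simp add: skew1_def skew1_real_def norm_power)

lemma skew1_real_nonneg: "0 \<le> r \<Longrightarrow> 0 \<le> skew1_real lam mu r"
  by (simp add: skew1_real_def)

lemma skew1_real_mono: "0 \<le> r \<Longrightarrow> r \<le> r' \<Longrightarrow> skew1_real lam mu r \<le> skew1_real lam mu r'"
  by (simp add: skew1_real_def power_mono)

lemma norm_skew1_le: "norm a \<le> r \<Longrightarrow> norm (skew1 lam mu a) \<le> skew1_real lam mu r"
  by (simp add: norm_skew1 skew1_real_mono)

lemma power_int_alt_sum_mono:
  fixes B B' :: real
  assumes "even n" "l \<in> Sign n" "0 \<le> B" "B \<le> B'"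
  shows "B powi alt_sum l \<le> B' powi alt_sum l"
  using alt_sum_nonneg[OF assms(1,2)] assms(3,4) by (simp add: power_int_def power_mono)

lemma norm_tau_le:
  "even n \<Longrightarrow> l \<in> Sign n \<Longrightarrow> norm c \<le> R \<Longrightarrow> norm (tau l c) \<le> R powi alt_sum l"
  by (simp add: tau_eq_power_int norm_power_int power_int_alt_sum_mono)

definition weight_bounded :: "nat \<Rightarrow> (int list \<Rightarrow> int list \<Rightarrow> real) \<Rightarrow> real \<Rightarrow> real \<Rightarrow> bool" where
  "weight_bounded n K B B' \<longleftrightarrow> (\<exists>C\<ge>0. \<forall>\<kappa>\<in>Sign n.
     (\<lambda>l. K \<kappa> l * B powi alt_sum l) summable_on Sign n \<and>
     (\<Sum>\<^sub>\<infinity>l\<in>Sign n. K \<kappa> l * B powi alt_sum l) \<le> C * B' powi alt_sum \<kappa>)"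

lemma weight_bounded_summable:
  "weight_bounded n K B B' \<Longrightarrow> \<kappa> \<in> Sign n \<Longrightarrow> (\<lambda>l. K \<kappa> l * B powi alt_sum l) summable_on Sign n"
  by (auto simp: weight_bounded_def)

lemma weight_bounded_id: "weight_bounded n (\<lambda>\<kappa> l. if \<kappa> = l then 1 else 0) B B"
  unfolding weight_bounded_def
proof (intro exI[of _ 1] conjI ballI)
  fix \<kappa> assume \<kappa>: "\<kappa> \<in> Sign n"
  have "(\<lambda>l. (if \<kappa> = l then 1 else 0) * B powi alt_sum l) = (\<lambda>l. if l = \<kappa> then B powi alt_sum \<kappa> else 0)"
    by (auto simp: fun_eq_iff)
  then have "((\<lambda>l. (if \<kappa> = l then 1 else 0) * B powi alt_sum l) has_sum B powi alt_sum \<kappa>) (Sign n)"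
    using has_sum_single[OF \<kappa>] by simp
  then show "(\<lambda>l. (if \<kappa> = l then 1 else 0) * B powi alt_sum l) summable_on Sign n"
    "(\<Sum>\<^sub>\<infinity>l\<in>Sign n. (if \<kappa> = l then 1 else 0) * B powi alt_sum l) \<le> 1 * B powi alt_sum \<kappa>"
    by (auto simp: summable_on_def infsumI)
qed simp

lemma has_sum_power_sum_list:
  fixes q :: real
  assumes "0 \<le> q" "q < 1"
  shows "((\<lambda>ds::nat list. q ^ sum_list ds) has_sum (1/(1-q))^m) {ds. length ds = m}"
proof (induction m)
  case 0
  have "{ds::nat list. length ds = 0} = {[]}" by auto
  then show ?case by (simp add: has_sum_finiteI)
next
  case (Suc m)
  define L where "L = {ds::nat list. length ds = m}"
  have geometric: "((\<lambda>d::nat. q^d) has_sum (1/(1-q))) UNIV"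
    using assms geometric_sums[of q] by (auto intro: norm_summable_imp_has_sum)
  have fibres: "((\<lambda>ds. (\<lambda>(d,ds). q^(d + sum_list ds)) (d, ds)) has_sum q^d * (1/(1-q))^m) L" for d
    using has_sum_cmult_right[OF Suc.IH, of "q^d"] by (simp add: power_add L_def)
  have total: "((\<lambda>d. q^d * (1/(1-q))^m) has_sum (1/(1-q)) * (1/(1-q))^m) UNIV"
    by (rule has_sum_cmult_left[OF geometric])
  have "(\<lambda>(d,ds). q^(d + sum_list ds)) summable_on UNIV \<times> L"
    by (rule summable_on_SigmaI[OF fibres has_sum_imp_summable[OF total]]) (use assms in auto)
  then have "((\<lambda>(d,ds). q^(d + sum_list ds)) has_sum (1/(1-q))^Suc m) (UNIV \<times> L)"
    using has_sum_SigmaI[OF fibres total] by simp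
  moreover have "bij_betw (\<lambda>(d,ds). d#ds) (UNIV \<times> L) {ds. length ds = Suc m}"
    by (rule bij_betw_byWitness[where f' = "\<lambda>ds. (hd ds, tl ds)"]) (auto simp: L_def length_Suc_conv)
  ultimately show ?case
    by (simp add: has_sum_reindex_bij_betw[symmetric] case_prod_unfold)
qed

lemma inj_on_increments:
  "inj_on (\<lambda>l. map (\<lambda>i. nat (l!i - \<kappa>!i)) [0..<length \<kappa>]) {l. interlace \<kappa> l}"
proof (rule inj_onI, rule nth_equalityI)
  fix l l' assume l: "l \<in> {l. interlace \<kappa> l}" and l': "l' \<in> {l. interlace \<kappa> l}"
    and eq: "map (\<lambda>i. nat (l!i - \<kappa>!i)) [0..<length \<kappa>] = map (\<lambda>i. nat (l'!i - \<kappa>!i)) [0..<length \<kappa>]"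
  then show "length l = length l'" by (simp add: interlace_def)
  fix i assume "i < length l"
  then have "i < length \<kappa>" "\<kappa>!i \<le> l!i" "\<kappa>!i \<le> l'!i" using l l' by (auto simp: interlace_def)
  then show "l!i = l'!i"
    using arg_cong[OF eq, of "\<lambda>xs. xs ! i"] by (simp add: eq_nat_nat_iff)
qed

lemma sum_list_increments:
  assumes "interlace \<kappa> l"
  shows "sum_list (map (\<lambda>i. nat (l!i - \<kappa>!i)) [0..<length \<kappa>]) = nat (skew_size l \<kappa>)"
proof -
  have "int (\<Sum>i<length \<kappa>. nat (l!i - \<kappa>!i)) = skew_size l \<kappa>"
    using assms by (simp add: of_nat_sum skew_size_def interlace_def)
  moreover have "sum_list (map (\<lambda>i. nat (l!i - \<kappa>!i)) [0..<length \<kappa>]) = (\<Sum>i<length \<kappa>. nat (l!i - \<kappa>!i))"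
    by (simp add: sum_list_sum_nth atLeast0LessThan)
  ultimately show ?thesis by (metis nat_int)
qed

lemma upper_neighbours_geometric:
  fixes q :: real
  assumes q: "0 \<le> q" "q < 1" and \<kappa>: "\<kappa> \<in> Sign n"
  defines "f \<equiv> \<lambda>l. if interlace \<kappa> l then q ^ nat (skew_size l \<kappa>) else 0"
  shows "f summable_on Sign n" "infsum f (Sign n) \<le> (1/(1-q))^n"
proof -
  let ?U = "{l. interlace \<kappa> l}" and ?D = "{ds::nat list. length ds = n}"
  let ?g = "\<lambda>ds::nat list. q ^ sum_list ds"
  define h where "h l = map (\<lambda>i. nat (l!i - \<kappa>!i)) [0..<length \<kappa>]" for l
  have inj: "inj_on h ?U" unfolding h_def by (rule inj_on_increments)
  have f_h: "f l = ?g (h l)" if "l \<in> ?U" for l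
    using that sum_list_increments[of \<kappa> l] by (simp add: f_def h_def)
  have hs: "(?g has_sum (1/(1-q))^n) ?D" by (rule has_sum_power_sum_list[OF q])
  have sub: "h ` ?U \<subseteq> ?D" using \<kappa> by (auto simp: h_def Sign_def)
  have g_summable: "?g summable_on h ` ?U"
    using summable_on_subset_banach[OF has_sum_imp_summable[OF hs] sub] .
  have f_zero: "f l = 0" if "l \<notin> ?U" for l using that by (simp add: f_def)
  have U_sub: "?U \<subseteq> Sign n" using interlace_upper_Sign[OF \<kappa>] by blast
  have "f summable_on ?U \<longleftrightarrow> f summable_on Sign n" "infsum f ?U = infsum f (Sign n)"
    by (rule summable_on_cong_neutral infsum_cong_neutral; use f_zero U_sub in blast)+
  note f_U = this
  have "(\<lambda>l. ?g (h l)) summable_on ?U"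
    using summable_on_reindex[OF inj, of ?g] g_summable by (simp add: o_def)
  moreover have "f summable_on ?U \<longleftrightarrow> (\<lambda>l. ?g (h l)) summable_on ?U"
    by (rule summable_on_cong) (use f_h in simp)
  ultimately show "f summable_on Sign n" using f_U by simp
  have "infsum f ?U = infsum (\<lambda>l. ?g (h l)) ?U"
    by (rule infsum_cong) (use f_h in simp)
  also have "\<dots> = infsum ?g (h ` ?U)"
    using infsum_reindex[OF inj, of ?g] by (simp add: o_def)
  also have "\<dots> \<le> infsum ?g ?D"
    by (rule infsum_mono2[OF g_summable has_sum_imp_summable[OF hs] sub]) (use q in auto)
  also have "\<dots> = (1/(1-q))^n" using hs by (rule infsumI)
  finally show "infsum f (Sign n) \<le> (1/(1-q))^n" using f_U by simp
qed

lemma power_weight_tradeoff: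
  fixes \<rho> B \<theta> :: real
  assumes "0 \<le> \<rho>" "0 \<le> B" "1 < \<theta>" "\<theta>*\<rho>*B \<le> 1"
  shows "\<rho>^(x+z) * B^(y+z) \<le> max B (\<theta>*\<rho>) ^ (x+y) * (1/\<theta>)^(x+z)"
proof -
  let ?M = "max B (\<theta>*\<rho>)"
  have "\<rho>^(x+z) * B^(y+z) = ((\<theta>*\<rho>)^x * B^y * (\<theta>*\<rho>*B)^z) * (1/\<theta>)^(x+z)"
    using assms(3) by (simp add: power_add power_mult_distrib field_simps)
  also have "\<dots> \<le> (?M^x * ?M^y * 1) * (1/\<theta>)^(x+z)"
    using assms by (intro mult_right_mono mult_mono power_mono power_le_one) auto
  finally show ?thesis by (simp add: power_add)
qed

lemma upper_neighbour_weight_le: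
  fixes \<rho> B \<theta> :: real
  assumes n: "even n" and \<kappa>: "\<kappa> \<in> Sign n" and l: "interlace \<kappa> l"
    and "0 \<le> \<rho>" "0 \<le> B" "1 < \<theta>" "\<theta>*\<rho>*B \<le> 1"
  shows "\<rho> ^ nat (skew_size l \<kappa>) * B powi alt_sum l
           \<le> max B (\<theta>*\<rho>) powi alt_sum \<kappa> * (1/\<theta>) ^ nat (skew_size l \<kappa>)"
proof -
  obtain k where k: "n = 2*k" using n by blast
  have len: "length \<kappa> = 2*k" "length l = 2*k" using \<kappa> l by (auto simp: Sign_def interlace_def k)
  have c1: "\<kappa>!i \<le> l!i" if "i < 2*k" for i using l len that by (simp add: interlace_def)
  have c2: "l!Suc i \<le> \<kappa>!i" if "Suc i < 2*k" for i using l len that by (simp add: interlace_def)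
  define X where "X = (\<Sum>m<k. l!(2*m) - \<kappa>!(2*m))"
  define Y where "Y = (\<Sum>m<k. \<kappa>!(2*m) - l!(2*m+1))"
  define Z where "Z = (\<Sum>m<k. l!(2*m+1) - \<kappa>!(2*m+1))"
  have "0 \<le> X" "0 \<le> Y" "0 \<le> Z"
    unfolding X_def Y_def Z_def using c1 c2 by (auto intro!: sum_nonneg)
  then obtain x y z where xyz: "X = int x" "Y = int y" "Z = int z"
    by (metis nonneg_int_cases)
  have "skew_size l \<kappa> = X + Z"
    unfolding skew_size_def len sum_lessThan_double X_def Z_def sum.distrib[symmetric]
    by (rule sum.cong) auto
  moreover have "alt_sum l = X + Y" "alt_sum \<kappa> = Z + Y"
    unfolding alt_sum_pairs[OF len(2)] alt_sum_pairs[OF len(1)] X_def Y_def Z_def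
      sum.distrib[symmetric] by (rule sum.cong; simp)+
  ultimately show ?thesis
    using power_weight_tradeoff[OF assms(4-7), of z x y] xyz
    by (simp add: power_int_of_nat[symmetric] nat_add_distrib ac_simps)
qed

lemma weight_bounded_upper:
  fixes \<rho> B \<theta> :: real
  assumes n: "even n" and "0 \<le> \<rho>" "0 \<le> B" "1 < \<theta>" "\<theta>*\<rho>*B \<le> 1"
  shows "weight_bounded n (\<lambda>\<kappa> l. skew1_real l \<kappa> \<rho>) B (max B (\<theta>*\<rho>))"
  unfolding weight_bounded_def
proof (intro exI[of _ "(1/(1-1/\<theta>))^n"] conjI ballI)
  show "0 \<le> (1/(1-1/\<theta>))^n" using assms(4) by simp
  fix \<kappa> assume \<kappa>: "\<kappa> \<in> Sign n"
  define M where "M = max B (\<theta>*\<rho>) powi alt_sum \<kappa>"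
  define g where "g l = (if interlace \<kappa> l then (1/\<theta>) ^ nat (skew_size l \<kappa>) else 0)" for l
  have q: "0 \<le> 1/\<theta>" "1/\<theta> < 1" using assms(4) by auto
  have g: "g summable_on Sign n" "infsum g (Sign n) \<le> (1/(1-1/\<theta>))^n"
    unfolding g_def by (rule upper_neighbours_geometric[OF q \<kappa>])+
  have M: "0 \<le> M" using assms(3) by (simp add: M_def)
  have le: "skew1_real l \<kappa> \<rho> * B powi alt_sum l \<le> M * g l" for l
    using upper_neighbour_weight_le[OF n \<kappa> _ assms(2-5), of l] M assms(3)
    by (auto simp: skew1_real_def g_def M_def)
  have nonneg: "0 \<le> skew1_real l \<kappa> \<rho> * B powi alt_sum l" for l
    using assms(2,3) by (simp add: skew1_real_nonneg)
  have Mg: "(\<lambda>l. M * g l) summable_on Sign n" by (rule summable_on_cmult_right[OF g(1)])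
  show summable: "(\<lambda>l. skew1_real l \<kappa> \<rho> * B powi alt_sum l) summable_on Sign n"
    by (rule summable_on_comparison_test[OF Mg]) (use le nonneg in auto)
  have "(\<Sum>\<^sub>\<infinity>l\<in>Sign n. skew1_real l \<kappa> \<rho> * B powi alt_sum l) \<le> (\<Sum>\<^sub>\<infinity>l\<in>Sign n. M * g l)"
    by (rule infsum_mono[OF summable Mg le])
  also have "\<dots> = M * infsum g (Sign n)" by (rule infsum_cmult_right')
  also have "\<dots> \<le> M * (1/(1-1/\<theta>))^n" by (rule mult_left_mono[OF g(2) M])
  finally show "(\<Sum>\<^sub>\<infinity>l\<in>Sign n. skew1_real l \<kappa> \<rho> * B powi alt_sum l)
      \<le> (1/(1-1/\<theta>))^n * max B (\<theta>*\<rho>) powi alt_sum \<kappa>"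
    by (simp add: M_def mult.commute)
qed

lemma weight_bounded_lower:
  fixes \<rho> B \<theta> :: real
  assumes "even n" "0 \<le> \<rho>" "0 \<le> B" "1 < \<theta>" "\<theta>*\<rho>*B \<le> 1"
  shows "weight_bounded n (\<lambda>\<kappa> l. skew1_real \<kappa> l \<rho>) B (max B (\<theta>*\<rho>))"
proof -
  have reflected: "((\<lambda>l. skew1_real \<kappa> l \<rho> * B powi alt_sum l) has_sum s) (Sign n)
      \<longleftrightarrow> ((\<lambda>p. skew1_real p \<kappa> \<rho> * B powi alt_sum p) has_sum s) (Sign n)"
    if "\<kappa> \<in> Sign n" for \<kappa> s
  proof -
    have "(\<lambda>l. skew1_real \<kappa> l \<rho> * B powi alt_sum l)
        = (\<lambda>l. if interlace l \<kappa> then \<rho> ^ nat (skew_size \<kappa> l) * B powi alt_sum l else 0)"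
      "(\<lambda>p. skew1_real p \<kappa> \<rho> * B powi alt_sum p)
        = (\<lambda>p. if interlace \<kappa> p then \<rho> ^ nat (skew_size p \<kappa>) * B powi alt_sum p else 0)"
      by (simp_all add: fun_eq_iff skew1_real_def)
    then show ?thesis
      using reflect_self_has_sum_iff[OF assms(1) that, of "\<lambda>d a. \<rho> ^ nat d * B powi a" s]
      by simp
  qed
  then have "(\<lambda>l. skew1_real \<kappa> l \<rho> * B powi alt_sum l) summable_on Sign n
      \<longleftrightarrow> (\<lambda>p. skew1_real p \<kappa> \<rho> * B powi alt_sum p) summable_on Sign n"
    "(\<Sum>\<^sub>\<infinity>l\<in>Sign n. skew1_real \<kappa> l \<rho> * B powi alt_sum l)
      = (\<Sum>\<^sub>\<infinity>p\<in>Sign n. skew1_real p \<kappa> \<rho> * B powi alt_sum p)" if "\<kappa> \<in> Sign n" for \<kappa>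
    using that by (auto simp: summable_on_def intro: infsum_eqI')
  then show ?thesis
    using weight_bounded_upper[OF assms] by (simp add: weight_bounded_def)
qed

lemma skew_size_minus_alt_sum_bounded:
  assumes n: "even n" and \<mu>: "\<mu> \<in> Sign n"
  obtains e1 e2 where "\<And>\<nu>. interlace \<mu> \<nu> \<Longrightarrow> e1 \<le> skew_size \<nu> \<mu> - alt_sum \<nu> \<and> skew_size \<nu> \<mu> - alt_sum \<nu> \<le> e2"
proof -
  obtain k where k: "n = 2*k" using n by blast
  have ll: "length \<mu> = 2*k" using \<mu> by (simp add: Sign_def k)
  have "(\<Sum>m<k. 2 * \<mu>!(2*m+1)) - sum_list \<mu> \<le> skew_size \<nu> \<mu> - alt_sum \<nu>
      \<and> skew_size \<nu> \<mu> - alt_sum \<nu> \<le> (\<Sum>m<k. 2 * \<mu>!(2*m)) - sum_list \<mu>" if \<nu>: "interlace \<mu> \<nu>" for \<nu>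
  proof -
    have ln: "length \<nu> = 2*k" using \<nu> ll by (simp add: interlace_def)
    have c1: "\<mu>!i \<le> \<nu>!i" if "i < 2*k" for i using \<nu> ln that by (simp add: interlace_def)
    have c2: "\<nu>!Suc i \<le> \<mu>!i" if "Suc i < 2*k" for i using \<nu> ln that by (simp add: interlace_def)
    have "sum_list \<nu> - alt_sum \<nu> = (\<Sum>m<k. 2 * \<nu>!(2*m+1))"
      unfolding sum_list_sum_nth atLeast0LessThan ln sum_lessThan_double alt_sum_pairs[OF ln]
        sum_subtractf[symmetric] by (rule sum.cong) auto
    then have "skew_size \<nu> \<mu> - alt_sum \<nu> = (\<Sum>m<k. 2 * \<nu>!(2*m+1)) - sum_list \<mu>"
      using ln ll by (simp add: skew_size_eq_sum_list)
    moreover have "(\<Sum>m<k. 2 * \<mu>!(2*m+1)) \<le> (\<Sum>m<k. 2 * \<nu>!(2*m+1))"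
      "(\<Sum>m<k. 2 * \<nu>!(2*m+1)) \<le> (\<Sum>m<k. 2 * \<mu>!(2*m))"
      using c1 c2 by (auto intro!: sum_mono)
    ultimately show ?thesis by simp
  qed
  then show ?thesis using that by blast
qed

lemma power_int_le_max:
  fixes r :: real
  assumes "0 < r" "e1 \<le> e" "e \<le> e2"
  shows "r powi e \<le> max (r powi e1) (r powi e2)"
proof (cases "r \<le> 1")
  case True
  then show ?thesis using power_int_decreasing[of e1 e r] assms by simp
next
  case False
  then show ?thesis using power_int_increasing[of e e2 r] assms by simp
qed

lemma upper_neighbour_ratio_bounded:
  fixes r :: real
  assumes n: "even n" and r: "0 < r" and \<mu>: "\<mu> \<in> Sign n"
  shows "\<exists>C\<ge>0. \<forall>\<nu>\<in>Sign n. skew1_real \<nu> \<mu> r \<le> C * r powi alt_sum \<nu>"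
proof -
  obtain e1 e2 where e: "\<And>\<nu>. interlace \<mu> \<nu> \<Longrightarrow>
      e1 \<le> skew_size \<nu> \<mu> - alt_sum \<nu> \<and> skew_size \<nu> \<mu> - alt_sum \<nu> \<le> e2"
    using skew_size_minus_alt_sum_bounded[OF n \<mu>] by blast
  define C where "C = max (r powi e1) (r powi e2)"
  have "skew1_real \<nu> \<mu> r \<le> C * r powi alt_sum \<nu>" for \<nu>
  proof (cases "interlace \<mu> \<nu>")
    case True
    then have "skew1_real \<nu> \<mu> r = r powi skew_size \<nu> \<mu>"
      using skew_size_nonneg[OF True] by (simp add: skew1_real_def power_int_def)
    also have "\<dots> = r powi (skew_size \<nu> \<mu> - alt_sum \<nu>) * r powi alt_sum \<nu>"
      using r by (simp add: power_int_add[symmetric])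
    also have "\<dots> \<le> C * r powi alt_sum \<nu>"
      unfolding C_def using power_int_le_max[OF r] e[OF True] r by (intro mult_right_mono) auto
    finally show ?thesis .
  qed (use r in \<open>auto simp: skew1_real_def C_def intro!: mult_nonneg_nonneg max.coboundedI1\<close>)
  moreover have "0 \<le> C" using r by (simp add: C_def le_max_iff_disj)
  ultimately show ?thesis by blast
qed

lemma lower_neighbour_ratio_bounded:
  fixes r :: real
  assumes "even n" "0 < r" "\<pi> \<in> Sign n"
  shows "\<exists>C\<ge>0. \<forall>\<nu>\<in>Sign n. skew1_real \<pi> \<nu> r \<le> C * r powi alt_sum \<nu>"
proof -
  obtain C where C: "0 \<le> C" and bound: "\<forall>p\<in>Sign n. skew1_real p \<pi> r \<le> C * r powi alt_sum p"
    using upper_neighbour_ratio_bounded[OF assms] by blast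
  have "skew1_real \<pi> \<nu> r \<le> C * r powi alt_sum \<nu>" if "\<nu> \<in> Sign n" for \<nu>
  proof (cases "interlace \<nu> \<pi>")
    case True
    have "length \<pi> = n" using assms(3) by (simp add: Sign_def)
    then have "skew1_real \<pi> \<nu> r = skew1_real (reflect \<pi> \<pi> \<nu>) \<pi> r"
      "alt_sum (reflect \<pi> \<pi> \<nu>) = alt_sum \<nu>"
      using True reflect_upper[OF True True] skew_size_reflect[OF True True]
        alt_sum_reflect_self[OF _ True] assms(1) by (simp_all add: skew1_real_def)
    then show ?thesis
      using bound interlace_upper_Sign[OF assms(3)] reflect_upper[OF True True] by metis
  qed (use C assms(2) in \<open>simp add: skew1_real_def\<close>)
  with C show ?thesis by blast
qed

section \<open>Interchanging summations\<close>

lemma nonneg_infsum_swap: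
  fixes g :: "'a \<Rightarrow> 'b \<Rightarrow> real"
  assumes nn: "\<And>x y. x\<in>A \<Longrightarrow> y\<in>B \<Longrightarrow> 0 \<le> g x y"
    and rows: "\<And>x. x\<in>A \<Longrightarrow> g x summable_on B"
    and outer: "(\<lambda>x. infsum (g x) B) summable_on A"
  shows "\<And>y. y \<in> B \<Longrightarrow> (\<lambda>x. g x y) summable_on A"
    and "(\<lambda>y. infsum (\<lambda>x. g x y) A) summable_on B"
    and "infsum (\<lambda>y. infsum (\<lambda>x. g x y) A) B = infsum (\<lambda>x. infsum (g x) B) A"
proof -
  have joint: "(\<lambda>(x,y). g x y) summable_on A \<times> B"
    by (rule summable_on_SigmaI[where g="\<lambda>x. infsum (g x) B"]) (use rows outer nn in auto)
  then have swapped: "(\<lambda>(y,x). g x y) summable_on B \<times> A"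
    using summable_on_swap[of "\<lambda>(x,y). g x y" A B] by (simp add: case_prod_unfold)
  show "(\<lambda>x. g x y) summable_on A" if "y \<in> B" for y
    using swapped that summable_on_SigmaD1[of "\<lambda>y x. g x y" B "\<lambda>_. A"] by simp
  from swapped show "(\<lambda>y. infsum (\<lambda>x. g x y) A) summable_on B"
    using summable_on_Sigma_banach[of "\<lambda>y x. g x y" B "\<lambda>_. A"] by simp
  show "infsum (\<lambda>y. infsum (\<lambda>x. g x y) A) B = infsum (\<lambda>x. infsum (g x) B) A"
    using infsum_swap_banach[of g A B] joint by simp
qed

lemma infsum_swap_norm_summable:
  fixes f :: "'a \<Rightarrow> 'b \<Rightarrow> complex"
  assumes rows: "\<And>x. x\<in>A \<Longrightarrow> (\<lambda>y. norm (f x y)) summable_on B"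
    and outer: "(\<lambda>x. infsum (\<lambda>y. norm (f x y)) B) summable_on A"
  shows "infsum (\<lambda>x. infsum (\<lambda>y. f x y) B) A = infsum (\<lambda>y. infsum (\<lambda>x. f x y) A) B"
proof -
  have "(\<lambda>x. norm (infsum (\<lambda>y. norm (f x y)) B)) summable_on A"
    using outer summable_on_iff_abs_summable_on_real by fastforce
  then have "(\<lambda>p. norm (f (fst p) (snd p))) summable_on A \<times> B"
    using Infinite_Sum.abs_summable_on_Sigma_iff[where f="\<lambda>p. f (fst p) (snd p)" and A=A and B="\<lambda>_. B"] rows
    by simp
  then have "(\<lambda>(x,y). f x y) summable_on A \<times> B"
    by (simp add: abs_summable_summable case_prod_beta')
  then show ?thesis by (rule infsum_swap_banach)
qed

lemma norm_mult_le_mult: "norm a \<le> a' \<Longrightarrow> norm b \<le> b' \<Longrightarrow> norm (a * b :: complex) \<le> a' * b'"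
  by (simp add: norm_mult mult_mono')

lemma infsum_swap_weight_bounded:
  fixes F :: "int list \<Rightarrow> int list \<Rightarrow> complex"
  assumes Q: "weight_bounded n Q B B'" and P: "\<And>x. x \<in> Sign n \<Longrightarrow> 0 \<le> P x"
    and PB': "(\<lambda>x. P x * B' powi alt_sum x) summable_on Sign n"
    and F: "\<And>x y. x \<in> Sign n \<Longrightarrow> y \<in> Sign n \<Longrightarrow> norm (F x y) \<le> P x * (Q x y * B powi alt_sum y)"
  shows "(\<Sum>\<^sub>\<infinity>x\<in>Sign n. \<Sum>\<^sub>\<infinity>y\<in>Sign n. F x y) = (\<Sum>\<^sub>\<infinity>y\<in>Sign n. \<Sum>\<^sub>\<infinity>x\<in>Sign n. F x y)"
proof (rule infsum_swap_norm_summable)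
  obtain C where C: "0 \<le> C" and Q_rows: "\<And>x. x \<in> Sign n \<Longrightarrow>
      (\<lambda>y. Q x y * B powi alt_sum y) summable_on Sign n \<and>
      (\<Sum>\<^sub>\<infinity>y\<in>Sign n. Q x y * B powi alt_sum y) \<le> C * B' powi alt_sum x"
    using Q by (auto simp: weight_bounded_def)
  have majorant: "(\<lambda>y. P x * (Q x y * B powi alt_sum y)) summable_on Sign n" if "x \<in> Sign n" for x
    using Q_rows[OF that] by (intro summable_on_cmult_right) simp
  show rows: "(\<lambda>y. norm (F x y)) summable_on Sign n" if "x \<in> Sign n" for x
    by (rule summable_on_comparison_test[OF majorant[OF that]]) (use F that in auto)
  have "(\<Sum>\<^sub>\<infinity>y\<in>Sign n. norm (F x y)) \<le> C * (P x * B' powi alt_sum x)" if x: "x \<in> Sign n" for x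
  proof -
    have "(\<Sum>\<^sub>\<infinity>y\<in>Sign n. norm (F x y)) \<le> (\<Sum>\<^sub>\<infinity>y\<in>Sign n. P x * (Q x y * B powi alt_sum y))"
      by (rule infsum_mono[OF rows[OF x] majorant[OF x]]) (use F x in auto)
    also have "\<dots> \<le> P x * (C * B' powi alt_sum x)"
      unfolding infsum_cmult_right' using Q_rows[OF x] P[OF x] by (intro mult_left_mono) auto
    finally show ?thesis by (simp add: ac_simps)
  qed
  then show "(\<lambda>x. \<Sum>\<^sub>\<infinity>y\<in>Sign n. norm (F x y)) summable_on Sign n"
    by (intro summable_on_comparison_test[OF summable_on_cmult_right[OF PB']])
      (auto intro: infsum_nonneg)
qed

lemma nonneg_compose_bound:
  fixes a v :: "'b \<Rightarrow> real" and X :: "'b \<Rightarrow> 'a \<Rightarrow> real" and w K :: "'a \<Rightarrow> real"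
  assumes a: "\<And>\<nu>. \<nu> \<in> N \<Longrightarrow> 0 \<le> a \<nu>" "(\<lambda>\<nu>. a \<nu> * v \<nu>) summable_on N"
    and X: "\<And>\<nu> l. \<nu> \<in> N \<Longrightarrow> l \<in> L \<Longrightarrow> 0 \<le> X \<nu> l" "0 \<le> C"
      "\<And>\<nu>. \<nu> \<in> N \<Longrightarrow> (\<lambda>l. X \<nu> l * w l) summable_on L \<and> (\<Sum>\<^sub>\<infinity>l\<in>L. X \<nu> l * w l) \<le> C * v \<nu>"
    and w: "\<And>l. l \<in> L \<Longrightarrow> 0 < w l"
    and K: "\<And>l. l \<in> L \<Longrightarrow> (\<lambda>\<nu>. a \<nu> * X \<nu> l) summable_on N \<Longrightarrow>
      0 \<le> K l \<and> K l \<le> (\<Sum>\<^sub>\<infinity>\<nu>\<in>N. a \<nu> * X \<nu> l)"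
  shows "(\<lambda>l. K l * w l) summable_on L" "(\<Sum>\<^sub>\<infinity>l\<in>L. K l * w l) \<le> C * (\<Sum>\<^sub>\<infinity>\<nu>\<in>N. a \<nu> * v \<nu>)"
proof -
  define g where "g \<nu> l = a \<nu> * (X \<nu> l * w l)" for \<nu> l
  have g_nonneg: "0 \<le> g \<nu> l" if "\<nu> \<in> N" "l \<in> L" for \<nu> l
    using that a(1) X(1) w by (simp add: g_def less_imp_le)
  have g_rows: "g \<nu> summable_on L" if "\<nu> \<in> N" for \<nu>
    unfolding g_def using X(3)[OF that] by (intro summable_on_cmult_right) simp
  have g_row_le: "infsum (g \<nu>) L \<le> C * (a \<nu> * v \<nu>)" if "\<nu> \<in> N" for \<nu>
    unfolding g_def infsum_cmult_right'
    using mult_left_mono[OF conjunct2[OF X(3)[OF that]] a(1)[OF that]] by (simp add: ac_simps)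
  have majorant: "(\<lambda>\<nu>. C * (a \<nu> * v \<nu>)) summable_on N"
    by (rule summable_on_cmult_right[OF a(2)])
  have outer: "(\<lambda>\<nu>. infsum (g \<nu>) L) summable_on N"
    by (rule summable_on_comparison_test[OF majorant g_row_le]) (use g_nonneg in \<open>auto intro: infsum_nonneg\<close>)
  have columns: "(\<lambda>\<nu>. g \<nu> l) summable_on N" if "l \<in> L" for l
    by (rule nonneg_infsum_swap(1)[of N L g]) (use g_nonneg g_rows outer that in auto)
  have column_sums: "(\<lambda>l. \<Sum>\<^sub>\<infinity>\<nu>\<in>N. g \<nu> l) summable_on L"
    by (rule nonneg_infsum_swap(2)[of N L g]) (use g_nonneg g_rows outer in auto)
  have swap: "(\<Sum>\<^sub>\<infinity>l\<in>L. \<Sum>\<^sub>\<infinity>\<nu>\<in>N. g \<nu> l) = (\<Sum>\<^sub>\<infinity>\<nu>\<in>N. infsum (g \<nu>) L)"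
    by (rule nonneg_infsum_swap(3)[of N L g]) (use g_nonneg g_rows outer in auto)
  have K_le: "0 \<le> K l * w l \<and> K l * w l \<le> (\<Sum>\<^sub>\<infinity>\<nu>\<in>N. g \<nu> l)" if l: "l \<in> L" for l
  proof -
    have "(\<lambda>\<nu>. a \<nu> * X \<nu> l * w l) summable_on N"
      using columns[OF l] by (simp add: g_def ac_simps)
    then have "(\<lambda>\<nu>. a \<nu> * X \<nu> l) summable_on N"
      using summable_on_cmult_left'[of "w l" "\<lambda>\<nu>. a \<nu> * X \<nu> l" N] w[OF l] by simp
    moreover have "(\<Sum>\<^sub>\<infinity>\<nu>\<in>N. g \<nu> l) = (\<Sum>\<^sub>\<infinity>\<nu>\<in>N. a \<nu> * X \<nu> l) * w l"
      by (simp add: g_def infsum_cmult_left'[symmetric] mult.assoc)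
    ultimately show ?thesis using K[OF l] w[OF l] by (simp add: mult_right_mono)
  qed
  show summable: "(\<lambda>l. K l * w l) summable_on L"
    by (rule summable_on_comparison_test[OF column_sums]) (use K_le in auto)
  have "(\<Sum>\<^sub>\<infinity>l\<in>L. K l * w l) \<le> (\<Sum>\<^sub>\<infinity>l\<in>L. \<Sum>\<^sub>\<infinity>\<nu>\<in>N. g \<nu> l)"
    by (rule infsum_mono[OF summable column_sums]) (use K_le in auto)
  also have "\<dots> \<le> (\<Sum>\<^sub>\<infinity>\<nu>\<in>N. C * (a \<nu> * v \<nu>))"
    unfolding swap by (rule infsum_mono[OF outer majorant g_row_le])
  finally show "(\<Sum>\<^sub>\<infinity>l\<in>L. K l * w l) \<le> C * (\<Sum>\<^sub>\<infinity>\<nu>\<in>N. a \<nu> * v \<nu>)"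
    by (simp add: infsum_cmult_right')
qed

lemma weight_bounded_compose:
  fixes A X K :: "int list \<Rightarrow> int list \<Rightarrow> real"
  assumes X: "weight_bounded n X B B1" and A: "weight_bounded n A B1 B2" and B: "0 < B"
    and A_nonneg: "\<And>\<kappa> \<nu>. \<kappa> \<in> Sign n \<Longrightarrow> \<nu> \<in> Sign n \<Longrightarrow> 0 \<le> A \<kappa> \<nu>"
    and X_nonneg: "\<And>\<nu> l. \<nu> \<in> Sign n \<Longrightarrow> l \<in> Sign n \<Longrightarrow> 0 \<le> X \<nu> l"
    and K: "\<And>\<kappa> l. \<kappa> \<in> Sign n \<Longrightarrow> l \<in> Sign n \<Longrightarrow> (\<lambda>\<nu>. A \<kappa> \<nu> * X \<nu> l) summable_on Sign n \<Longrightarrow>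
      0 \<le> K \<kappa> l \<and> K \<kappa> l \<le> (\<Sum>\<^sub>\<infinity>\<nu>\<in>Sign n. A \<kappa> \<nu> * X \<nu> l)"
  shows "weight_bounded n K B B2"
proof -
  obtain C1 where C1: "0 \<le> C1" and X_rows: "\<And>\<nu>. \<nu> \<in> Sign n \<Longrightarrow>
      (\<lambda>l. X \<nu> l * B powi alt_sum l) summable_on Sign n \<and>
      (\<Sum>\<^sub>\<infinity>l\<in>Sign n. X \<nu> l * B powi alt_sum l) \<le> C1 * B1 powi alt_sum \<nu>"
    using X by (auto simp: weight_bounded_def)
  obtain C2 where C2: "0 \<le> C2" and A_rows: "\<And>\<kappa>. \<kappa> \<in> Sign n \<Longrightarrow>
      (\<lambda>\<nu>. A \<kappa> \<nu> * B1 powi alt_sum \<nu>) summable_on Sign n \<and>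
      (\<Sum>\<^sub>\<infinity>\<nu>\<in>Sign n. A \<kappa> \<nu> * B1 powi alt_sum \<nu>) \<le> C2 * B2 powi alt_sum \<kappa>"
    using A by (auto simp: weight_bounded_def)
  have w: "0 < B powi alt_sum l" for l using B by simp
  have "(\<lambda>l. K \<kappa> l * B powi alt_sum l) summable_on Sign n \<and>
      (\<Sum>\<^sub>\<infinity>l\<in>Sign n. K \<kappa> l * B powi alt_sum l) \<le> C1 * C2 * B2 powi alt_sum \<kappa>"
    if \<kappa>: "\<kappa> \<in> Sign n" for \<kappa>
  proof -
    note composed = nonneg_compose_bound[where a = "A \<kappa>" and v = "\<lambda>\<nu>. B1 powi alt_sum \<nu>",
        OF A_nonneg[OF \<kappa>] conjunct1[OF A_rows[OF \<kappa>]] X_nonneg C1 X_rows w K[OF \<kappa>]]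
    show ?thesis
      using composed order.trans[OF composed(2) mult_left_mono[OF conjunct2[OF A_rows[OF \<kappa>]] C1]]
      by (simp add: ac_simps)
  qed
  then show ?thesis
    unfolding weight_bounded_def using C1 C2 by (intro exI[of _ "C1 * C2"]) auto
qed

lemma sum_swap_lower:
  fixes F t :: "int list \<Rightarrow> complex"
  assumes n: "even n" and \<theta>: "1 < \<theta>" and x: "0 < r" "norm x \<le> r" and R: "0 < R" "\<theta>*r*R \<le> 1"
    and t: "0 \<le> C" "\<And>l. l \<in> Sign n \<Longrightarrow> norm (t l) \<le> C * R powi alt_sum l"
    and F: "(\<lambda>\<nu>. norm (F \<nu>) * max R (\<theta>*r) powi alt_sum \<nu>) summable_on Sign n"
  shows "(\<Sum>\<^sub>\<infinity>l\<in>Sign n. t l * (\<Sum>\<^sub>\<infinity>\<nu>\<in>Sign n. F \<nu> * skew1 \<nu> l x))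
       = (\<Sum>\<^sub>\<infinity>\<nu>\<in>Sign n. F \<nu> * (\<Sum>\<^sub>\<infinity>l\<in>Sign n. skew1 \<nu> l x * t l))"
proof -
  have "(\<Sum>\<^sub>\<infinity>\<nu>\<in>Sign n. \<Sum>\<^sub>\<infinity>l\<in>Sign n. F \<nu> * (skew1 \<nu> l x * t l))
      = (\<Sum>\<^sub>\<infinity>l\<in>Sign n. \<Sum>\<^sub>\<infinity>\<nu>\<in>Sign n. F \<nu> * (skew1 \<nu> l x * t l))"
  proof (rule infsum_swap_weight_bounded[OF weight_bounded_lower[OF n _ _ \<theta> R(2)]])
    show "(\<lambda>\<nu>. C * norm (F \<nu>) * max R (\<theta>*r) powi alt_sum \<nu>) summable_on Sign n"
      using summable_on_cmult_right[OF F, of C] by (simp add: ac_simps)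
    show "norm (F \<nu> * (skew1 \<nu> l x * t l)) \<le> C * norm (F \<nu>) * (skew1_real \<nu> l r * R powi alt_sum l)"
      if "l \<in> Sign n" for \<nu> l
      using norm_mult_le_mult[OF order_refl norm_mult_le_mult[OF norm_skew1_le[OF x(2)] t(2)[OF that]]]
      by (simp add: ac_simps)
  qed (use x R t in auto)
  then show ?thesis
    by (simp add: infsum_cmult_right'[symmetric] ac_simps)
qed

lemma sum_swap_upper:
  fixes F t :: "int list \<Rightarrow> complex"
  assumes n: "even n" and \<theta>: "1 < \<theta>" and x: "0 < r" "norm x \<le> r" and R: "0 < R" "\<theta>*r*R \<le> 1"
    and t: "0 \<le> C" "\<And>p. p \<in> Sign n \<Longrightarrow> norm (t p) \<le> C * R powi alt_sum p"
    and F: "(\<lambda>\<nu>. norm (F \<nu>) * max R (\<theta>*r) powi alt_sum \<nu>) summable_on Sign n"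
  shows "(\<Sum>\<^sub>\<infinity>p\<in>Sign n. t p * (\<Sum>\<^sub>\<infinity>\<nu>\<in>Sign n. F \<nu> * skew1 p \<nu> x))
       = (\<Sum>\<^sub>\<infinity>\<nu>\<in>Sign n. F \<nu> * (\<Sum>\<^sub>\<infinity>p\<in>Sign n. skew1 p \<nu> x * t p))"
proof -
  have "(\<Sum>\<^sub>\<infinity>\<nu>\<in>Sign n. \<Sum>\<^sub>\<infinity>p\<in>Sign n. F \<nu> * (skew1 p \<nu> x * t p))
      = (\<Sum>\<^sub>\<infinity>p\<in>Sign n. \<Sum>\<^sub>\<infinity>\<nu>\<in>Sign n. F \<nu> * (skew1 p \<nu> x * t p))"
  proof (rule infsum_swap_weight_bounded[OF weight_bounded_upper[OF n _ _ \<theta> R(2)]])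
    show "(\<lambda>\<nu>. C * norm (F \<nu>) * max R (\<theta>*r) powi alt_sum \<nu>) summable_on Sign n"
      using summable_on_cmult_right[OF F, of C] by (simp add: ac_simps)
    show "norm (F \<nu> * (skew1 p \<nu> x * t p)) \<le> C * norm (F \<nu>) * (skew1_real p \<nu> r * R powi alt_sum p)"
      if "p \<in> Sign n" for \<nu> p
      using norm_mult_le_mult[OF order_refl norm_mult_le_mult[OF norm_skew1_le[OF x(2)] t(2)[OF that]]]
      by (simp add: ac_simps)
  qed (use x R t in auto)
  then show ?thesis
    by (simp add: infsum_cmult_right'[symmetric] ac_simps)
qed

lemma sum_swap_weight_bounded:
  fixes G :: "int list \<Rightarrow> int list \<Rightarrow> complex" and t :: "int list \<Rightarrow> complex"
  assumes n: "even n" and \<theta>: "1 < \<theta>" and x: "0 < r" "norm x \<le> r"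
    and t: "0 \<le> C" "\<And>p. p \<in> Sign n \<Longrightarrow> norm (t p) \<le> C * R powi alt_sum p"
    and G: "weight_bounded n (\<lambda>\<mu> p. norm (G \<mu> p)) R B" and B: "0 \<le> B" "\<theta>*r*B \<le> 1"
    and \<kappa>: "\<kappa> \<in> Sign n"
  shows "(\<Sum>\<^sub>\<infinity>p\<in>Sign n. t p * (\<Sum>\<^sub>\<infinity>\<mu>\<in>Sign n. skew1 \<mu> \<kappa> x * G \<mu> p))
       = (\<Sum>\<^sub>\<infinity>\<mu>\<in>Sign n. skew1 \<mu> \<kappa> x * (\<Sum>\<^sub>\<infinity>p\<in>Sign n. t p * G \<mu> p))"
proof -
  have "(\<Sum>\<^sub>\<infinity>\<mu>\<in>Sign n. \<Sum>\<^sub>\<infinity>p\<in>Sign n. skew1 \<mu> \<kappa> x * (t p * G \<mu> p))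
      = (\<Sum>\<^sub>\<infinity>p\<in>Sign n. \<Sum>\<^sub>\<infinity>\<mu>\<in>Sign n. skew1 \<mu> \<kappa> x * (t p * G \<mu> p))"
  proof (rule infsum_swap_weight_bounded[OF G])
    show "(\<lambda>\<mu>. C * skew1_real \<mu> \<kappa> r * B powi alt_sum \<mu>) summable_on Sign n"
      using summable_on_cmult_right[OF weight_bounded_summable[OF
          weight_bounded_upper[OF n _ B(1) \<theta> B(2)] \<kappa>], of C] x by (simp add: ac_simps)
    show "norm (skew1 \<mu> \<kappa> x * (t p * G \<mu> p))
        \<le> C * skew1_real \<mu> \<kappa> r * (norm (G \<mu> p) * R powi alt_sum p)" if "p \<in> Sign n" for \<mu> p
      using norm_mult_le_mult[OF norm_skew1_le[OF x(2)]
          norm_mult_le_mult[OF t(2)[OF that] order_refl[of "norm (G \<mu> p)"]]]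
      by (simp add: ac_simps)
  qed (use t(1) skew1_real_nonneg[OF less_imp_le[OF x(1)]] in auto)
  then show ?thesis
    by (simp add: infsum_cmult_right'[symmetric] ac_simps)
qed

section \<open>Slack in the convergence conditions\<close>

fun slack_max :: "real \<Rightarrow> real list \<Rightarrow> real \<Rightarrow> real" where
  "slack_max \<theta> [] B = B"
| "slack_max \<theta> (r # rs) B = max (\<theta>*r) (slack_max \<theta> rs B)"

lemma slack_max_snoc: "slack_max \<theta> (rs @ [r]) B = slack_max \<theta> rs (max B (\<theta>*r))"
  by (induction rs) auto

lemma slack_max_snoc': "slack_max \<theta> (rs @ [r]) B = max (slack_max \<theta> rs B) (\<theta>*r)"
  by (induction rs) (auto simp: max.assoc max.commute max.left_commute)

lemma slack_max_ge: "B \<le> slack_max \<theta> rs B"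
  by (induction rs) auto

lemma slack_max_le: "B \<le> t \<Longrightarrow> \<forall>r\<in>set rs. \<theta>*r \<le> t \<Longrightarrow> slack_max \<theta> rs B \<le> t"
  by (induction rs) auto

lemma slack_max_bound:
  assumes "0 < r" "0 < \<theta>" "\<theta>*r*B \<le> 1" and pairs: "\<forall>r'\<in>set rs. \<theta>*\<theta>*r'*r \<le> 1"
  shows "\<theta>*r * slack_max \<theta> rs B \<le> 1"
proof -
  have pos: "0 < \<theta>*r" using assms(1,2) by simp
  have "slack_max \<theta> rs B \<le> 1/(\<theta>*r)"
  proof (rule slack_max_le)
    show "B \<le> 1/(\<theta>*r)" using assms(3) pos by (simp add: pos_le_divide_eq mult_ac)
    show "\<forall>r'\<in>set rs. \<theta>*r' \<le> 1/(\<theta>*r)"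
      using pairs pos by (auto simp: pos_le_divide_eq mult_ac)
  qed
  then show ?thesis using pos by (simp add: pos_le_divide_eq mult_ac)
qed

text \<open>The radii \<open>rs\<close> majorize the variables \<open>as\<close> and still satisfy the convergence
  conditions \<open>|a\<^sub>i c| < 1\<close>, \<open>|a\<^sub>i a\<^sub>j| < 1\<close> after enlarging by the factor \<open>\<theta> > 1\<close>,
  where \<open>B\<close> bounds \<open>|c|\<close>.\<close>

definition slack_majorants :: "real \<Rightarrow> real \<Rightarrow> complex list \<Rightarrow> real list \<Rightarrow> bool" where
  "slack_majorants \<theta> B as rs \<longleftrightarrow> length rs = length as \<and>
     (\<forall>i<length as. norm (as!i) \<le> rs!i \<and> 0 < rs!i \<and> \<theta>*rs!i*B \<le> 1) \<and>
     (\<forall>i<length as. \<forall>j<length as. i \<noteq> j \<longrightarrow> \<theta>*\<theta>*rs!i*rs!j \<le> 1)"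

lemma slack_majorants_snoc:
  assumes "slack_majorants \<theta> B (as @ [x]) rs'"
  obtains rs r where "rs' = rs @ [r]" "slack_majorants \<theta> B as rs" "norm x \<le> r" "0 < r" "\<theta>*r*B \<le> 1"
    "\<forall>r'\<in>set rs. \<theta>*\<theta>*r'*r \<le> 1"
proof -
  have "length rs' = Suc (length as)" using assms by (simp add: slack_majorants_def)
  then obtain rs r where rs': "rs' = rs @ [r]" and len: "length rs = length as"
    by (metis length_append_singleton length_Suc_conv_rev)
  have single: "\<forall>i<Suc (length as). norm ((as @ [x])!i) \<le> (rs @ [r])!i \<and> 0 < (rs @ [r])!i
      \<and> \<theta>*(rs @ [r])!i*B \<le> 1"
    and pair: "\<forall>i<Suc (length as). \<forall>j<Suc (length as). i \<noteq> j \<longrightarrow> \<theta>*\<theta>*(rs @ [r])!i*(rs @ [r])!j \<le> 1"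
    using assms rs' by (auto simp: slack_majorants_def)
  have "slack_majorants \<theta> B as rs"
    unfolding slack_majorants_def
  proof (intro conjI allI impI)
    fix i assume i: "i < length as"
    then show "norm (as!i) \<le> rs!i" "0 < rs!i" "\<theta>*rs!i*B \<le> 1"
      using single[rule_format, of i] len by (auto simp: nth_append)
    fix j assume "j < length as" "i \<noteq> j"
    then show "\<theta>*\<theta>*rs!i*rs!j \<le> 1" using pair[rule_format, of i j] i len by (auto simp: nth_append)
  qed (rule len)
  moreover have "norm x \<le> r" "0 < r" "\<theta>*r*B \<le> 1"
    using single[rule_format, of "length as"] len by (auto simp: nth_append)
  moreover have "\<forall>r'\<in>set rs. \<theta>*\<theta>*r'*r \<le> 1"
    using pair[rule_format, of _ "length as"] len by (auto simp: in_set_conv_nth nth_append)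
  ultimately show ?thesis using that[OF rs'] by blast
qed

lemma slack_majorants_max:
  assumes maj: "slack_majorants \<theta> B as rs" and pairs: "\<forall>r'\<in>set rs. \<theta>*\<theta>*r'*r \<le> 1" and "0 < \<theta>"
  shows "slack_majorants \<theta> (max B (\<theta>*r)) as rs"
  unfolding slack_majorants_def
proof (intro conjI allI impI)
  fix i assume i: "i < length as"
  have "\<theta>*\<theta>*rs!i*r \<le> 1" using maj pairs i by (simp add: slack_majorants_def)
  then show "\<theta>*rs!i*max B (\<theta>*r) \<le> 1"
    using maj i \<open>0 < \<theta>\<close> by (auto simp: slack_majorants_def max_def mult_ac)
qed (use maj in \<open>auto simp: slack_majorants_def\<close>)

lemma slack_majorants_mono:
  assumes maj: "slack_majorants \<theta> B as rs" and "0 \<le> B'" "B' \<le> B" "0 \<le> \<theta>"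
  shows "slack_majorants \<theta> B' as rs"
  unfolding slack_majorants_def
proof (intro conjI allI impI)
  fix i assume i: "i < length as"
  have "\<theta>*rs!i*B \<le> 1" "0 \<le> rs!i" using maj i by (auto simp: slack_majorants_def less_imp_le)
  moreover have "\<theta>*rs!i*B' \<le> \<theta>*rs!i*B"
    using assms(2-4) \<open>0 \<le> rs!i\<close> by (intro mult_left_mono) auto
  ultimately show "\<theta>*rs!i*B' \<le> 1" by linarith
qed (use maj in \<open>auto simp: slack_majorants_def\<close>)

lemma eventually_slack:
  fixes u v :: real
  assumes "u * v < 1"
  shows "\<forall>\<^sub>F \<delta> in at_right 0. (1+\<delta>)*(1+\<delta>)*(u+\<delta>)*(v+\<delta>) < 1"
proof -
  have "((\<lambda>\<delta>. (1+\<delta>)*(1+\<delta>)*(u+\<delta>)*(v+\<delta>)) \<longlongrightarrow> (1+0)*(1+0)*(u+0)*(v+0)) (at_right 0)"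
    by (intro tendsto_intros)
  then show ?thesis using assms by (simp add: order_tendstoD(2))
qed

lemma slack_majorants_exist:
  fixes a :: "complex list" and c :: complex
  assumes pairs: "\<And>i j. i < j \<Longrightarrow> j < length a \<Longrightarrow> norm (a!i * a!j) < 1"
    and with_c: "\<And>i. i < length a \<Longrightarrow> norm (a!i * c) < 1"
  obtains \<theta> R rs where "1 < \<theta>" "0 < R" "norm c \<le> R" "slack_majorants \<theta> R a rs"
proof -
  let ?I = "{..<length a}" and ?P = "\<lambda>\<delta> u v. (1+\<delta>)*(1+\<delta>)*(u+\<delta>)*(v+\<delta>) < 1"
  have "\<forall>\<^sub>F \<delta> in at_right 0. ?P \<delta> (norm (a!i)) (norm c)" if "i \<in> ?I" for i
    using that with_c by (intro eventually_slack) (simp add: norm_mult)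
  moreover have "\<forall>\<^sub>F \<delta> in at_right 0. i \<noteq> j \<longrightarrow> ?P \<delta> (norm (a!i)) (norm (a!j))"
    if "(i, j) \<in> ?I \<times> ?I" for i j
  proof (cases i j rule: linorder_cases)
    case less then show ?thesis
      using that pairs[of i j] by (intro eventually_mono[OF eventually_slack]) (auto simp: norm_mult)
  next
    case greater then show ?thesis
      using that pairs[of j i] by (intro eventually_mono[OF eventually_slack]) (auto simp: norm_mult mult.commute)
  qed simp
  ultimately have "\<forall>\<^sub>F \<delta> in at_right 0. 0 < \<delta> \<and> (\<forall>i\<in>?I. ?P \<delta> (norm (a!i)) (norm c)) \<and>
      (\<forall>(i, j)\<in>?I \<times> ?I. i \<noteq> j \<longrightarrow> ?P \<delta> (norm (a!i)) (norm (a!j)))"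
    by (intro eventually_conj eventually_at_right_less eventually_ball_finite) auto
  then obtain \<delta> :: real where \<delta>: "0 < \<delta>" "\<forall>i\<in>?I. ?P \<delta> (norm (a!i)) (norm c)"
    "\<forall>(i, j)\<in>?I \<times> ?I. i \<noteq> j \<longrightarrow> ?P \<delta> (norm (a!i)) (norm (a!j))"
    using eventually_happens'[OF trivial_limit_at_right_real] by blast
  have "slack_majorants (1+\<delta>) (norm c + \<delta>) a (map (\<lambda>z. norm z + \<delta>) a)"
    unfolding slack_majorants_def
  proof (intro conjI allI impI)
    fix i assume i: "i < length a"
    show "norm (a!i) \<le> map (\<lambda>z. norm z + \<delta>) a ! i" "0 < map (\<lambda>z. norm z + \<delta>) a ! i"
      using i \<delta>(1) by (simp_all add: add_nonneg_pos)
    have "(1+\<delta>)*(norm (a!i)+\<delta>)*(norm c+\<delta>) \<le> (1+\<delta>)*(1+\<delta>)*(norm (a!i)+\<delta>)*(norm c+\<delta>)"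
      using \<delta>(1) by (simp add: mult_right_mono)
    then show "(1+\<delta>) * map (\<lambda>z. norm z + \<delta>) a ! i * (norm c + \<delta>) \<le> 1"
      using \<delta>(2)[rule_format, of i] i by simp
    fix j assume "j < length a" "i \<noteq> j"
    then show "(1+\<delta>) * (1+\<delta>) * map (\<lambda>z. norm z + \<delta>) a ! i * map (\<lambda>z. norm z + \<delta>) a ! j \<le> 1"
      using \<delta>(3) i by force
  qed simp
  then show ?thesis
    using that[of "1+\<delta>" "norm c + \<delta>"] \<delta>(1) by (simp add: add_nonneg_pos)
qed

section \<open>Absolute convergence and commutation in several variables\<close>

lemma norm_skew_snoc_le:
  assumes "norm x \<le> r"
    and summable: "(\<lambda>\<nu>. norm (skew n \<kappa> \<nu> as) * skew1_real \<nu> l r) summable_on Sign n"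
  shows "norm (skew n \<kappa> l (as @ [x])) \<le> (\<Sum>\<^sub>\<infinity>\<nu>\<in>Sign n. norm (skew n \<kappa> \<nu> as) * skew1_real \<nu> l r)"
proof -
  have bound: "norm (skew n \<kappa> \<nu> as * skew1 \<nu> l x) \<le> norm (skew n \<kappa> \<nu> as) * skew1_real \<nu> l r" for \<nu>
    using assms(1) by (simp add: norm_mult norm_skew1 mult_left_mono skew1_real_mono)
  have abs: "(\<lambda>\<nu>. norm (skew n \<kappa> \<nu> as * skew1 \<nu> l x)) summable_on Sign n"
    by (rule Infinite_Sum.abs_summable_on_comparison_test'[OF summable]) (use bound in auto)
  have "norm (skew n \<kappa> l (as @ [x])) \<le> (\<Sum>\<^sub>\<infinity>\<nu>\<in>Sign n. norm (skew n \<kappa> \<nu> as * skew1 \<nu> l x))"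
    unfolding skew_snoc by (rule norm_infsum_bound[OF abs])
  also have "\<dots> \<le> (\<Sum>\<^sub>\<infinity>\<nu>\<in>Sign n. norm (skew n \<kappa> \<nu> as) * skew1_real \<nu> l r)"
    by (rule infsum_mono[OF abs summable bound])
  finally show ?thesis .
qed

lemma weight_bounded_skew_lower:
  assumes n: "even n" and \<theta>: "1 < \<theta>" and "0 < B" and "slack_majorants \<theta> B as rs"
  shows "weight_bounded n (\<lambda>\<kappa> l. norm (skew n \<kappa> l as)) B (slack_max \<theta> rs B)"
  using assms(3,4)
proof (induction as arbitrary: B rs rule: rev_induct)
  case Nil
  have "(\<lambda>\<kappa> l. norm (skew n \<kappa> l [])) = (\<lambda>\<kappa> l. if \<kappa> = l then 1 else 0)"
    by (simp add: skew_Nil fun_eq_iff)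
  with Nil show ?case
    using weight_bounded_id by (simp add: slack_majorants_def)
next
  case (snoc x as)
  from snoc.prems(2) obtain rs0 r where rs: "rs = rs0 @ [r]" and maj: "slack_majorants \<theta> B as rs0"
    and xr: "norm x \<le> r" and r: "0 < r" and rB: "\<theta>*r*B \<le> 1" and pairs: "\<forall>r'\<in>set rs0. \<theta>*\<theta>*r'*r \<le> 1"
    by (rule slack_majorants_snoc)
  have IH: "weight_bounded n (\<lambda>\<kappa> \<nu>. norm (skew n \<kappa> \<nu> as)) (max B (\<theta>*r)) (slack_max \<theta> rs B)"
    using snoc.IH[OF _ slack_majorants_max[OF maj pairs]] snoc.prems(1) \<theta>
    by (simp add: rs slack_max_snoc)
  show ?case
  proof (rule weight_bounded_compose[OF weight_bounded_lower IH snoc.prems(1)])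
    show "(\<lambda>\<nu>. norm (skew n \<kappa> \<nu> as) * skew1_real \<nu> l r) summable_on Sign n \<Longrightarrow>
        0 \<le> norm (skew n \<kappa> l (as @ [x])) \<and>
        norm (skew n \<kappa> l (as @ [x])) \<le> (\<Sum>\<^sub>\<infinity>\<nu>\<in>Sign n. norm (skew n \<kappa> \<nu> as) * skew1_real \<nu> l r)"
      for \<kappa> l using norm_skew_snoc_le[OF xr] by simp
  qed (use n \<theta> r rB snoc.prems(1) in \<open>auto intro: skew1_real_nonneg\<close>)
qed

lemma weight_bounded_skew_upper:
  assumes n: "even n" and \<theta>: "1 < \<theta>" and B: "0 < B" and "slack_majorants \<theta> B as rs"
  shows "weight_bounded n (\<lambda>\<kappa> l. norm (skew n l \<kappa> as)) B (slack_max \<theta> rs B)"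
  using assms(4)
proof (induction as arbitrary: rs rule: rev_induct)
  case Nil
  have "(\<lambda>\<kappa> l. norm (skew n l \<kappa> [])) = (\<lambda>\<kappa> l. if \<kappa> = l then 1 else 0)"
    by (auto simp: skew_Nil fun_eq_iff)
  with Nil show ?case
    using weight_bounded_id by (simp add: slack_majorants_def)
next
  case (snoc x as)
  from snoc.prems obtain rs0 r where rs: "rs = rs0 @ [r]" and maj: "slack_majorants \<theta> B as rs0"
    and xr: "norm x \<le> r" and r: "0 < r" and rB: "\<theta>*r*B \<le> 1" and pairs: "\<forall>r'\<in>set rs0. \<theta>*\<theta>*r'*r \<le> 1"
    by (rule slack_majorants_snoc)
  define B2 where "B2 = slack_max \<theta> rs0 B"
  have B2: "B \<le> B2" "\<theta> * r * B2 \<le> 1"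
    using slack_max_ge slack_max_bound[OF r _ rB pairs] \<theta> by (auto simp: B2_def)
  have lower: "weight_bounded n (\<lambda>\<kappa> \<nu>. skew1_real \<nu> \<kappa> r) B2 (slack_max \<theta> rs B)"
    using weight_bounded_upper[OF n _ _ \<theta> B2(2)] r B B2(1) by (simp add: rs slack_max_snoc' B2_def)
  show ?case
  proof (rule weight_bounded_compose[OF snoc.IH[OF maj, folded B2_def] lower B])
    show "(\<lambda>\<nu>. skew1_real \<nu> \<kappa> r * norm (skew n l \<nu> as)) summable_on Sign n \<Longrightarrow>
        0 \<le> norm (skew n l \<kappa> (as @ [x])) \<and>
        norm (skew n l \<kappa> (as @ [x])) \<le> (\<Sum>\<^sub>\<infinity>\<nu>\<in>Sign n. skew1_real \<nu> \<kappa> r * norm (skew n l \<nu> as))"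
      for \<kappa> l using norm_skew_snoc_le[OF xr, of n l as \<kappa>] by (simp add: mult.commute)
  qed (use r in \<open>auto intro: skew1_real_nonneg\<close>)
qed

lemma sum_skew1_pair_commute:
  fixes F :: "int list \<Rightarrow> complex"
  assumes n: "even n" and \<theta>: "1 < \<theta>" and r: "0 < rx" "0 < ry" "\<theta>*rx*ry \<le> 1"
    and xy: "norm x \<le> rx" "norm y \<le> ry" and \<pi>: "\<pi> \<in> Sign n"
    and F_x: "(\<lambda>\<eta>. norm (F \<eta>) * max rx (\<theta>*ry) powi alt_sum \<eta>) summable_on Sign n"
    and F_y: "(\<lambda>\<eta>. norm (F \<eta>) * max ry (\<theta>*rx) powi alt_sum \<eta>) summable_on Sign n"
  shows "(\<Sum>\<^sub>\<infinity>\<nu>\<in>Sign n. skew1 \<pi> \<nu> x * (\<Sum>\<^sub>\<infinity>\<eta>\<in>Sign n. F \<eta> * skew1 \<eta> \<nu> y))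
       = (\<Sum>\<^sub>\<infinity>\<zeta>\<in>Sign n. skew1 \<zeta> \<pi> y * (\<Sum>\<^sub>\<infinity>\<eta>\<in>Sign n. F \<eta> * skew1 \<zeta> \<eta> x))"
proof -
  obtain Cx where Cx: "0 \<le> Cx" "\<And>\<nu>. \<nu> \<in> Sign n \<Longrightarrow> skew1_real \<pi> \<nu> rx \<le> Cx * rx powi alt_sum \<nu>"
    using lower_neighbour_ratio_bounded[OF n r(1) \<pi>] by blast
  obtain Cy where Cy: "0 \<le> Cy" "\<And>\<zeta>. \<zeta> \<in> Sign n \<Longrightarrow> skew1_real \<zeta> \<pi> ry \<le> Cy * ry powi alt_sum \<zeta>"
    using upper_neighbour_ratio_bounded[OF n(1) r(2) \<pi>] by blast
  have "(\<Sum>\<^sub>\<infinity>\<nu>\<in>Sign n. skew1 \<pi> \<nu> x * (\<Sum>\<^sub>\<infinity>\<eta>\<in>Sign n. F \<eta> * skew1 \<eta> \<nu> y))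
      = (\<Sum>\<^sub>\<infinity>\<eta>\<in>Sign n. F \<eta> * (\<Sum>\<^sub>\<infinity>\<nu>\<in>Sign n. skew1 \<eta> \<nu> y * skew1 \<pi> \<nu> x))"
    by (rule sum_swap_lower[OF n \<theta> r(2) xy(2) r(1) _ Cx(1) order.trans[OF norm_skew1_le[OF xy(1)] Cx(2)] F_x])
      (use r in \<open>simp_all add: ac_simps\<close>)
  also have "\<dots> = (\<Sum>\<^sub>\<infinity>\<eta>\<in>Sign n. F \<eta> * (\<Sum>\<^sub>\<infinity>\<zeta>\<in>Sign n. skew1 \<zeta> \<eta> x * skew1 \<zeta> \<pi> y))"
    by (rule infsum_cong) (simp add: skew1_commute[OF _ \<pi>])
  also have "\<dots> = (\<Sum>\<^sub>\<infinity>\<zeta>\<in>Sign n. skew1 \<zeta> \<pi> y * (\<Sum>\<^sub>\<infinity>\<eta>\<in>Sign n. F \<eta> * skew1 \<zeta> \<eta> x))"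
    by (rule sum_swap_upper[OF n(1) \<theta> r(1) xy(1) r(2) r(3) Cy(1)
          order.trans[OF norm_skew1_le[OF xy(2)] Cy(2)] F_y, symmetric])
  finally show ?thesis .
qed

lemma skew_skew1_commute:
  assumes n: "even n" and \<theta>: "1 < \<theta>" and x: "0 < rx" "norm x \<le> rx"
    and "slack_majorants \<theta> (\<theta>*rx) as rs" and "\<kappa> \<in> Sign n" "\<pi> \<in> Sign n"
  shows "(\<Sum>\<^sub>\<infinity>\<nu>\<in>Sign n. skew n \<kappa> \<nu> as * skew1 \<pi> \<nu> x) = (\<Sum>\<^sub>\<infinity>\<mu>\<in>Sign n. skew1 \<mu> \<kappa> x * skew n \<mu> \<pi> as)"
  using assms(5-7)
proof (induction as arbitrary: rs \<kappa> \<pi> rule: rev_induct)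
  case Nil
  then show ?case by (simp add: infsum_skew_Nil)
next
  case (snoc y as)
  let ?S = "Sign n"
  from snoc.prems(1) obtain rs0 ry where maj: "slack_majorants \<theta> (\<theta>*rx) as rs0"
    and y: "norm y \<le> ry" "0 < ry" and ryx: "\<theta>*ry*(\<theta>*rx) \<le> 1" and pairs: "\<forall>r'\<in>set rs0. \<theta>*\<theta>*r'*ry \<le> 1"
    by (rule slack_majorants_snoc)
  have "\<theta>*rx*ry \<le> \<theta>*ry*(\<theta>*rx)"
    using mult_right_mono[of 1 \<theta> "\<theta>*rx*ry"] \<theta> x(1) y(2) by (simp add: ac_simps)
  then have rxy: "\<theta>*rx*ry \<le> 1" "\<theta>*ry*rx \<le> 1" using ryx by (simp_all add: ac_simps)
  have maj_max: "slack_majorants \<theta> (max (\<theta>*rx) (\<theta>*ry)) as rs0"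
    using slack_majorants_max[OF maj pairs] \<theta> by simp
  have summable: "(\<lambda>\<eta>. norm (skew n \<kappa> \<eta> as) * B powi alt_sum \<eta>) summable_on ?S"
    if "0 < B" "B \<le> max (\<theta>*rx) (\<theta>*ry)" for B
    using weight_bounded_summable[OF weight_bounded_skew_lower[OF n \<theta> that(1)
        slack_majorants_mono[OF maj_max _ that(2)]] snoc.prems(2)] that \<theta> by simp
  have "rx \<le> \<theta>*rx" "ry \<le> \<theta>*ry" using \<theta> x(1) y(2) by simp_all
  then have le_max: "max rx (\<theta>*ry) \<le> max (\<theta>*rx) (\<theta>*ry)" "max ry (\<theta>*rx) \<le> max (\<theta>*rx) (\<theta>*ry)"
    by (auto intro: max.coboundedI1 max.coboundedI2)
  have maj_x: "slack_majorants \<theta> rx as rs0"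
    by (rule slack_majorants_mono[OF maj]) (use \<theta> x in auto)
  define Fx where "Fx = slack_max \<theta> rs0 rx"
  have Fx: "0 \<le> Fx" "\<theta>*ry*Fx \<le> 1"
    using slack_max_ge[of rx \<theta> rs0] slack_max_bound[OF y(2) _ rxy(2) pairs] x \<theta>
    by (simp_all add: Fx_def)
  obtain Ck where Ck: "0 \<le> Ck" "\<And>\<mu>. \<mu> \<in> ?S \<Longrightarrow> skew1_real \<mu> \<kappa> rx \<le> Ck * rx powi alt_sum \<mu>"
    using upper_neighbour_ratio_bounded[OF n(1) x(1) snoc.prems(2)] by blast
  have "(\<Sum>\<^sub>\<infinity>\<nu>\<in>?S. skew n \<kappa> \<nu> (as @ [y]) * skew1 \<pi> \<nu> x)
      = (\<Sum>\<^sub>\<infinity>\<nu>\<in>?S. skew1 \<pi> \<nu> x * (\<Sum>\<^sub>\<infinity>\<eta>\<in>?S. skew n \<kappa> \<eta> as * skew1 \<eta> \<nu> y))"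
    by (simp add: skew_snoc mult.commute)
  also have "\<dots> = (\<Sum>\<^sub>\<infinity>\<zeta>\<in>?S. skew1 \<zeta> \<pi> y * (\<Sum>\<^sub>\<infinity>\<eta>\<in>?S. skew n \<kappa> \<eta> as * skew1 \<zeta> \<eta> x))"
    by (rule sum_skew1_pair_commute[OF n \<theta> x(1) y(2) rxy(1) x(2) y(1) snoc.prems(3) summable summable])
      (use x y le_max in auto)
  also have "\<dots> = (\<Sum>\<^sub>\<infinity>\<zeta>\<in>?S. skew1 \<zeta> \<pi> y * (\<Sum>\<^sub>\<infinity>\<mu>\<in>?S. skew1 \<mu> \<kappa> x * skew n \<mu> \<zeta> as))"
    by (rule infsum_cong) (simp add: snoc.IH[OF maj snoc.prems(2)])
  also have "\<dots> = (\<Sum>\<^sub>\<infinity>\<mu>\<in>?S. skew1 \<mu> \<kappa> x * (\<Sum>\<^sub>\<infinity>\<zeta>\<in>?S. skew1 \<zeta> \<pi> y * skew n \<mu> \<zeta> as))"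
    by (rule sum_swap_weight_bounded[OF n(1) \<theta> y(2,1) Ck(1) order.trans[OF norm_skew1_le[OF x(2)] Ck(2)]
          weight_bounded_skew_upper[OF n(1) \<theta> x(1) maj_x, folded Fx_def] Fx snoc.prems(3), symmetric])
  also have "\<dots> = (\<Sum>\<^sub>\<infinity>\<mu>\<in>?S. skew1 \<mu> \<kappa> x * skew n \<mu> \<pi> (as @ [y]))"
    by (simp add: skew_snoc mult.commute)
  finally show ?case .
qed

lemma tau_sum_skew_reflect:
  assumes n: "even n" and \<theta>: "1 < \<theta>" and c: "0 < R" "norm c \<le> R"
    and "slack_majorants \<theta> R as rs" and "\<kappa> \<in> Sign n"
  shows "(\<Sum>\<^sub>\<infinity>l\<in>Sign n. tau l c * skew n \<kappa> l as) = (\<Sum>\<^sub>\<infinity>p\<in>Sign n. tau p c * skew n p \<kappa> as)"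
  using assms(5,6)
proof (induction as arbitrary: rs \<kappa> rule: rev_induct)
  case Nil
  then show ?case using infsum_skew_Nil[of \<kappa> n "\<lambda>l. tau l c"] by (simp add: mult.commute)
next
  case (snoc x as)
  let ?S = "Sign n"
  from snoc.prems(1) obtain rs0 r where maj: "slack_majorants \<theta> R as rs0"
    and x: "norm x \<le> r" "0 < r" and rR: "\<theta>*r*R \<le> 1" and pairs: "\<forall>r'\<in>set rs0. \<theta>*\<theta>*r'*r \<le> 1"
    by (rule slack_majorants_snoc)
  have maj_max: "slack_majorants \<theta> (max R (\<theta>*r)) as rs0"
    using slack_majorants_max[OF maj pairs] \<theta> by simp
  have maj_x: "slack_majorants \<theta> (\<theta>*r) as rs0"
    by (rule slack_majorants_mono[OF maj_max]) (use \<theta> x in auto)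
  define FR where "FR = slack_max \<theta> rs0 R"
  have FR: "0 \<le> FR" "\<theta>*r*FR \<le> 1"
    using slack_max_ge[of R \<theta> rs0] slack_max_bound[OF x(2) _ rR pairs] c \<theta> by (simp_all add: FR_def)
  have lower: "weight_bounded n (\<lambda>\<mu> p. norm (skew n \<mu> p as)) R FR"
    and upper: "weight_bounded n (\<lambda>\<mu> p. norm (skew n p \<mu> as)) R FR"
    unfolding FR_def by (rule weight_bounded_skew_lower[OF n \<theta> c(1) maj]
        weight_bounded_skew_upper[OF n(1) \<theta> c(1) maj])+
  have coefficients: "(\<lambda>\<nu>. norm (skew n \<kappa> \<nu> as) * max R (\<theta>*r) powi alt_sum \<nu>) summable_on ?S"
    by (rule weight_bounded_summable[OF weight_bounded_skew_lower[OF n \<theta> _ maj_max] snoc.prems(2)])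
      (use c in simp)
  have tau: "norm (tau l c) \<le> 1 * R powi alt_sum l" if "l \<in> ?S" for l
    using norm_tau_le[OF n(1) that c(2)] by simp
  have "(\<Sum>\<^sub>\<infinity>l\<in>?S. tau l c * skew n \<kappa> l (as @ [x]))
      = (\<Sum>\<^sub>\<infinity>\<nu>\<in>?S. skew n \<kappa> \<nu> as * (\<Sum>\<^sub>\<infinity>l\<in>?S. skew1 \<nu> l x * tau l c))"
    unfolding skew_snoc by (rule sum_swap_lower[OF n \<theta> x(2,1) c(1) rR _ tau coefficients]) simp
  also have "\<dots> = (\<Sum>\<^sub>\<infinity>\<nu>\<in>?S. skew n \<kappa> \<nu> as * (\<Sum>\<^sub>\<infinity>p\<in>?S. skew1 p \<nu> x * tau p c))"
    by (rule infsum_cong) (simp add: skew1_tau_reflect[OF n])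
  also have "\<dots> = (\<Sum>\<^sub>\<infinity>p\<in>?S. tau p c * (\<Sum>\<^sub>\<infinity>\<nu>\<in>?S. skew n \<kappa> \<nu> as * skew1 p \<nu> x))"
    by (rule sum_swap_upper[OF n(1) \<theta> x(2,1) c(1) rR _ tau coefficients, symmetric]) simp
  also have "\<dots> = (\<Sum>\<^sub>\<infinity>p\<in>?S. tau p c * (\<Sum>\<^sub>\<infinity>\<mu>\<in>?S. skew1 \<mu> \<kappa> x * skew n \<mu> p as))"
    by (rule infsum_cong) (simp add: skew_skew1_commute[OF n \<theta> x(2,1) maj_x snoc.prems(2)])
  also have "\<dots> = (\<Sum>\<^sub>\<infinity>\<mu>\<in>?S. skew1 \<mu> \<kappa> x * (\<Sum>\<^sub>\<infinity>p\<in>?S. tau p c * skew n \<mu> p as))"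
    by (rule sum_swap_weight_bounded[OF n(1) \<theta> x(2,1) _ tau lower FR snoc.prems(2)]) simp
  also have "\<dots> = (\<Sum>\<^sub>\<infinity>\<mu>\<in>?S. skew1 \<mu> \<kappa> x * (\<Sum>\<^sub>\<infinity>q\<in>?S. tau q c * skew n q \<mu> as))"
    by (rule infsum_cong) (simp add: snoc.IH[OF maj])
  also have "\<dots> = (\<Sum>\<^sub>\<infinity>q\<in>?S. tau q c * (\<Sum>\<^sub>\<infinity>\<mu>\<in>?S. skew1 \<mu> \<kappa> x * skew n q \<mu> as))"
    by (rule sum_swap_weight_bounded[OF n(1) \<theta> x(2,1) _ tau upper FR snoc.prems(2), symmetric]) simp
  also have "\<dots> = (\<Sum>\<^sub>\<infinity>q\<in>?S. tau q c * skew n q \<kappa> (as @ [x]))"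
    by (simp add: skew_snoc mult.commute)
  finally show ?case .
qed

lemma summable_norm_tau_mult:
  assumes "even n" "weight_bounded n (\<lambda>\<kappa> l. norm (G \<kappa> l)) R B" "norm c \<le> R" "\<kappa> \<in> Sign n"
  shows "(\<lambda>l. norm (tau l c * G \<kappa> l)) summable_on Sign n"
proof (rule summable_on_comparison_test[OF weight_bounded_summable[OF assms(2,4)]])
  show "norm (tau l c * G \<kappa> l) \<le> norm (G \<kappa> l) * R powi alt_sum l" if "l \<in> Sign n" for l
    using norm_mult_le_mult[OF norm_tau_le[OF assms(1) that assms(3)] order_refl[of "norm (G \<kappa> l)"]]
    by (simp add: ac_simps)
qed simp

theorem proposition2p7:
  fixes n :: nat and c :: complex and a :: "complex list" and \<kappa> :: "int list"
  assumes "even n" and "n \<ge> 1"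
    and "\<And>i j. i < j \<Longrightarrow> j < length a \<Longrightarrow> norm (a ! i * a ! j) < 1"
    and "\<And>i. i < length a \<Longrightarrow> norm (a ! i * c) < 1"
    and "\<kappa> \<in> Sign n"
  shows "(\<lambda>l. norm (tau l c * skew n \<kappa> l a)) summable_on Sign n
       \<and> (\<lambda>\<pi>. norm (tau \<pi> c * skew n \<pi> \<kappa> a)) summable_on Sign n
       \<and> (\<Sum>\<^sub>\<infinity> l \<in> Sign n. tau l c * skew n \<kappa> l a)
         = (\<Sum>\<^sub>\<infinity> \<pi> \<in> Sign n. tau \<pi> c * skew n \<pi> \<kappa> a)"
proof -
  obtain \<theta> R rs where \<theta>: "1 < \<theta>" and R: "0 < R" "norm c \<le> R" and maj: "slack_majorants \<theta> R a rs"
    using slack_majorants_exist[OF assms(3,4)] by blast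
  show ?thesis
    using summable_norm_tau_mult[OF assms(1) weight_bounded_skew_lower[OF assms(1) \<theta> R(1) maj] R(2) assms(5)]
      summable_norm_tau_mult[OF assms(1) weight_bounded_skew_upper[OF assms(1) \<theta> R(1) maj] R(2) assms(5)]
      tau_sum_skew_reflect[OF assms(1) \<theta> R maj assms(5)]
    by simp
qed

end
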